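(* For every positive integer $n$, $\mathcal{L}_n$ is the closure in $\mathbb{R}$ of the set $\mathcal{P}_n = \{\lambda_n(\xi) : \xi \text{ a real quadratic irrational}\}$.
   Context: For an irrational real $\xi$ and positive integer $n$, $\lambda_n(\xi) = \limsup_{s/t \to \xi} \dfrac{\gcd(t,n)}{t^2 \left| \frac{s}{t} - \xi\right|}$ (limsup over rationals $s/t$, $t>0$, tending to $\xi$), and $\mathcal{L}_n = \{\lambda_n(\xi)\in\mathbb{R} : \xi\in\mathbb{R}\setminus\mathbb{Q}\}$. *)

theory Defs
  imports "HOL-Analysis.Analysis"
begin

definition lam_quot :: "nat \<Rightarrow> real \<Rightarrow> int \<Rightarrow> int \<Rightarrow> real" where
  "lam_quot n \<xi> s t = real_of_int (gcd t (int n)) / ((real_of_int t)^2 * \<bar>real_of_int s / real_of_int t - \<xi>\<bar>)"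

definition lambda_n :: "nat \<Rightarrow> real \<Rightarrow> ereal" where
  "lambda_n n \<xi> = (INF \<epsilon>\<in>{0<..}. SUP st\<in>{(s, t). t > 0 \<and> real_of_int s / real_of_int t \<noteq> \<xi> \<and>
        \<bar>real_of_int s / real_of_int t - \<xi>\<bar> < \<epsilon>}. ereal (lam_quot n \<xi> (fst st) (snd st)))"

definition L_n :: "nat \<Rightarrow> real set" where
  "L_n n = {x. \<exists>\<xi>. \<xi> \<notin> \<rat> \<and> lambda_n n \<xi> = ereal x}"

definition quadratic_irrational :: "real \<Rightarrow> bool" where
  "quadratic_irrational \<xi> \<longleftrightarrow> \<xi> \<notin> \<rat> \<and>
     (\<exists>a b c :: int. a \<noteq> 0 \<and> of_int a * \<xi>^2 + of_int b * \<xi> + of_int c = 0)"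

definition P_n :: "nat \<Rightarrow> real set" where
  "P_n n = {x. \<exists>\<xi>. quadratic_irrational \<xi> \<and> lambda_n n \<xi> = ereal x}"

end

(* lambda_n only sees the tail of the continued fraction expansion of xi. Writing a fraction in the
   basis of two consecutive convergents, s/t = (u p_j + v p_(j-1)) / (u q_j + v q_(j-1)), its quotient is
   gcd(t, n) (alpha_(j+1) + beta_j) / |(u + v beta_j) (u - v alpha_(j+1))| with the complete quotient
   alpha_(j+1) = [a_(j+1); a_(j+2), ...] and beta_j = q_(j-1)/q_j = [0; a_j, ..., a_1]. Only bounded u, v
   matter, two steps of the Gauss map contract by 1/4, and gcd(t, n) only depends on q_j, q_(j-1) mod n;
   so up to epsilon the quotients at position j are determined by the "local signature": R digits on
   either side of j and the residues of q_j, q_(j-1) mod n.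

   For L_n within the closure of P_n: the digits of xi are eventually bounded, so by pigeonhole two
   positions i < j with nearly maximal quotients share a local signature; repeating the block
   a_(i+1) ... a_j forever gives a periodic, hence quadratic irrational, expansion with lambda_n within
   epsilon of lambda_n(xi). For L_n closed: given lambda_n(xi_k) -> x, blocks of the expansions of the
   xi_k between positions with matching local signatures of growing length, selected by a diagonal
   argument, are glued into one expansion whose lambda_n is x. *)

theory Submission
  imports Defs
begin

section \<open>Continued fractions\<close>

definition cf_digits :: "(nat \<Rightarrow> int) \<Rightarrow> bool" where
  "cf_digits a \<longleftrightarrow> (\<forall>k\<ge>1. a k \<ge> 1)"

text \<open>Indices are shifted by one: \<open>cf_num a (Suc k) / cf_den a (Suc k)\<close> is the convergent
  \<open>p\<^sub>k / q\<^sub>k = [a\<^sub>0; a\<^sub>1, \<dots>, a\<^sub>k]\<close>, and index \<open>0\<close> holds \<open>p\<^sub>-\<^sub>1 = 1\<close>, \<open>q\<^sub>-\<^sub>1 = 0\<close>.\<close>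

fun cf_num :: "(nat \<Rightarrow> int) \<Rightarrow> nat \<Rightarrow> int" where
  "cf_num a 0 = 1"
| "cf_num a (Suc 0) = a 0"
| "cf_num a (Suc (Suc k)) = a (Suc k) * cf_num a (Suc k) + cf_num a k"

fun cf_den :: "(nat \<Rightarrow> int) \<Rightarrow> nat \<Rightarrow> int" where
  "cf_den a 0 = 0"
| "cf_den a (Suc 0) = 1"
| "cf_den a (Suc (Suc k)) = a (Suc k) * cf_den a (Suc k) + cf_den a k"

definition cf_shift :: "(nat \<Rightarrow> int) \<Rightarrow> nat \<Rightarrow> nat \<Rightarrow> int" where
  "cf_shift a i = (\<lambda>k. a (k + i))"

lemma cf_shift_apply: "cf_shift a i k = a (k + i)"
  by (simp add: cf_shift_def)

lemma cf_shift_apply_0 [simp]: "cf_shift a i 0 = a i"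
  by (simp add: cf_shift_def)

lemma cf_digitsD: "cf_digits a \<Longrightarrow> k \<ge> 1 \<Longrightarrow> a k \<ge> 1"
  by (simp add: cf_digits_def)

lemma cf_digits_shift: "cf_digits a \<Longrightarrow> cf_digits (cf_shift a i)"
  by (simp add: cf_digits_def cf_shift_apply)

lemma cf_den_basic_bounds:
  assumes "cf_digits a"
  shows "0 \<le> cf_den a k \<and> 1 \<le> cf_den a (Suc k) \<and> cf_den a k \<le> cf_den a (Suc k)"
proof (induction k)
  case (Suc k)
  then have IH: "0 \<le> cf_den a k" "1 \<le> cf_den a (Suc k)" by simp_all
  have "cf_den a (Suc k) \<le> a (Suc k) * cf_den a (Suc k)"
    using IH cf_digitsD[OF assms, of "Suc k"] by (simp add: mult_le_cancel_right1)
  with IH show ?case by (simp only: cf_den.simps, intro conjI; linarith)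
qed simp

lemma cf_den_nonneg: "cf_digits a \<Longrightarrow> cf_den a k \<ge> 0"
  using cf_den_basic_bounds by blast

lemma cf_den_Suc_pos: "cf_digits a \<Longrightarrow> cf_den a (Suc k) \<ge> 1"
  using cf_den_basic_bounds by blast

lemma cf_den_le_Suc: "cf_digits a \<Longrightarrow> cf_den a k \<le> cf_den a (Suc k)"
  using cf_den_basic_bounds by blast

lemma cf_den_mono:
  assumes "cf_digits a" "k \<le> m"
  shows "cf_den a k \<le> cf_den a m"
  using assms(2) by (induction m rule: dec_induct) (use cf_den_le_Suc[OF assms(1)] order_trans in blast)+

lemma cf_den_Suc_real_ge_1: "cf_digits a \<Longrightarrow> real_of_int (cf_den a (Suc k)) \<ge> 1"
  using cf_den_Suc_pos[of a k] by linarith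

lemma cf_den_real_nonneg: "cf_digits a \<Longrightarrow> real_of_int (cf_den a k) \<ge> 0"
  using cf_den_nonneg[of a k] by linarith

lemma cf_den_strict:
  assumes "cf_digits a" "k \<ge> 1"
  shows "cf_den a (Suc k) < cf_den a (Suc (Suc k))"
proof -
  have "cf_den a k \<ge> 1" using cf_den_Suc_pos[OF assms(1), of "k - 1"] assms(2) by simp
  moreover have "cf_den a (Suc k) \<le> a (Suc k) * cf_den a (Suc k)"
    using cf_digitsD[OF assms(1), of "Suc k"] cf_den_Suc_pos[OF assms(1), of k]
    by (simp add: mult_le_cancel_right1)
  ultimately show ?thesis by simp
qed

lemma cf_den_Suc_ge: "cf_digits a \<Longrightarrow> cf_den a (Suc k) \<ge> int k"
proof (induction k)
  case (Suc k)
  then show ?case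
    using cf_den_strict[OF Suc.prems, of k] cf_den_Suc_pos[OF Suc.prems, of "Suc k"] by (cases k) auto
qed simp

lemma cf_num_den_det: "cf_num a (Suc k) * cf_den a k - cf_num a k * cf_den a (Suc k) = (-1) ^ Suc k"
proof (induction k)
  case (Suc k)
  have "cf_num a (Suc (Suc k)) * cf_den a (Suc k) - cf_num a (Suc k) * cf_den a (Suc (Suc k))
      = - (cf_num a (Suc k) * cf_den a k - cf_num a k * cf_den a (Suc k))"
    by (simp add: algebra_simps)
  with Suc show ?case by simp
qed simp

lemma coprime_cf_den: "coprime (cf_den a (Suc k)) (cf_den a k)"
proof (rule coprimeI)
  fix c assume "c dvd cf_den a (Suc k)" "c dvd cf_den a k"
  then have "c dvd cf_num a (Suc k) * cf_den a k - cf_num a k * cf_den a (Suc k)"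
    by (simp add: dvd_diff)
  then have "c dvd (-1) ^ Suc k" by (simp only: cf_num_den_det)
  moreover have "((-1::int) ^ Suc k) dvd 1" by (simp add: power_minus1_odd)
  ultimately show "is_unit c" by (rule dvd_trans)
qed

lemma cf_num_den_shift:
  "cf_num a (Suc k) = a 0 * cf_num (cf_shift a 1) k + cf_den (cf_shift a 1) k \<and>
   cf_den a (Suc k) = cf_num (cf_shift a 1) k"
  by (induction k rule: induct_nat_012) (simp_all add: cf_shift_apply algebra_simps)

definition cf_conv :: "(nat \<Rightarrow> int) \<Rightarrow> nat \<Rightarrow> real" where
  "cf_conv a k = real_of_int (cf_num a (Suc k)) / real_of_int (cf_den a (Suc k))"

definition cf_mobius :: "(nat \<Rightarrow> int) \<Rightarrow> nat \<Rightarrow> real \<Rightarrow> real" where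
  "cf_mobius a k x = (real_of_int (cf_num a (Suc k)) * x + real_of_int (cf_num a k)) /
                     (real_of_int (cf_den a (Suc k)) * x + real_of_int (cf_den a k))"

lemma cf_conv_0 [simp]: "cf_conv a 0 = a 0"
  by (simp add: cf_conv_def)

lemma cf_conv_Suc_shift:
  assumes "cf_digits a"
  shows "cf_conv a (Suc k) = a 0 + 1 / cf_conv (cf_shift a 1) k"
proof -
  have "cf_den (cf_shift a 1) (Suc k) \<ge> 1" "cf_num (cf_shift a 1) (Suc k) \<ge> 1"
    using cf_den_Suc_pos[OF cf_digits_shift[OF assms]] cf_den_Suc_pos[OF assms, of "Suc k"]
      cf_num_den_shift[of a "Suc k"] by auto
  then show ?thesis
    using cf_num_den_shift[of a "Suc k"] by (simp add: cf_conv_def field_simps)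
qed

lemma cf_conv_eq_mobius: "cf_conv a (Suc k) = cf_mobius a k (a (Suc k))"
  by (simp add: cf_conv_def cf_mobius_def mult.commute)

lemma cf_mobius_0: "x \<noteq> 0 \<Longrightarrow> cf_mobius a 0 x = a 0 + 1 / x"
  by (simp add: cf_mobius_def field_simps)

lemma cf_mobius_denom_pos:
  assumes "cf_digits a" "x > 0"
  shows "real_of_int (cf_den a (Suc k)) * x + real_of_int (cf_den a k) > 0"
  using cf_den_Suc_real_ge_1[OF assms(1), of k] cf_den_real_nonneg[OF assms(1), of k] assms(2)
  by (simp add: add_pos_nonneg)

lemma cf_mobius_Suc:
  assumes "cf_digits a" "x > 0"
  shows "cf_mobius a (Suc k) x = cf_mobius a k (a (Suc k) + 1 / x)"
proof -
  define A where "A = real_of_int (cf_num a (Suc k))"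
  define B where "B = real_of_int (cf_num a k)"
  define C where "C = real_of_int (cf_den a (Suc k))"
  define D where "D = real_of_int (cf_den a k)"
  define e where "e = real_of_int (a (Suc k))"
  have "cf_mobius a (Suc k) x = ((e * A + B) * x + A) / ((e * C + D) * x + C)"
    unfolding cf_mobius_def A_def B_def C_def D_def e_def by simp
  also have "\<dots> = (((e * A + B) * x + A) / x) / (((e * C + D) * x + C) / x)"
    using assms(2) by simp
  also have "\<dots> = (A * (e + 1 / x) + B) / (C * (e + 1 / x) + D)"
    using assms(2) by (simp add: field_simps)
  also have "\<dots> = cf_mobius a k (a (Suc k) + 1 / x)"
    unfolding cf_mobius_def A_def B_def C_def D_def e_def by simp
  finally show ?thesis .
qed

lemma cf_mobius_minus_conv:
  assumes "cf_digits a" "x > 0"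
  shows "cf_mobius a k x - cf_conv a k = (-1) ^ k /
     (real_of_int (cf_den a (Suc k)) * (real_of_int (cf_den a (Suc k)) * x + real_of_int (cf_den a k)))"
proof -
  have det: "real_of_int (cf_num a (Suc k)) * real_of_int (cf_den a k)
      - real_of_int (cf_num a k) * real_of_int (cf_den a (Suc k)) = (-1) ^ Suc k"
    using arg_cong[OF cf_num_den_det[of a k], of real_of_int] by simp
  have "cf_mobius a k x - cf_conv a k =
     (real_of_int (cf_den a (Suc k)) * real_of_int (cf_num a k) - real_of_int (cf_num a (Suc k)) * real_of_int (cf_den a k)) /
     (real_of_int (cf_den a (Suc k)) * (real_of_int (cf_den a (Suc k)) * x + real_of_int (cf_den a k)))"
    using cf_den_Suc_real_ge_1[OF assms(1), of k] cf_mobius_denom_pos[OF assms, of k]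
    unfolding cf_mobius_def cf_conv_def by (simp add: field_simps)
  also have "\<dots> = (-1) ^ k /
     (real_of_int (cf_den a (Suc k)) * (real_of_int (cf_den a (Suc k)) * x + real_of_int (cf_den a k)))"
    using det by (simp add: algebra_simps)
  finally show ?thesis .
qed

lemma cf_mobius_conv_dist:
  assumes "cf_digits a" "x \<ge> 1"
  shows "\<bar>cf_mobius a k x - cf_conv a k\<bar> \<le> 1 / (real_of_int (cf_den a (Suc k)))^2"
proof -
  define C where "C = real_of_int (cf_den a (Suc k))"
  have C: "C \<ge> 1" unfolding C_def using cf_den_Suc_real_ge_1[OF assms(1)] .
  have "C * 1 \<le> C * x" using C assms(2) by (intro mult_left_mono) auto
  then have d: "C \<le> C * x + real_of_int (cf_den a k)" using cf_den_real_nonneg[OF assms(1), of k] by linarith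
  have "\<bar>cf_mobius a k x - cf_conv a k\<bar> = 1 / (C * (C * x + real_of_int (cf_den a k)))"
    using cf_mobius_minus_conv[OF assms(1), of x k] assms(2) C d unfolding C_def
    by (simp add: abs_mult power_abs)
  also have "\<dots> \<le> 1 / C^2"
    using C d by (simp add: power2_eq_square frac_le mult_left_mono)
  finally show ?thesis unfolding C_def .
qed

lemma cf_mobius_reach:
  assumes "cf_digits a" "z \<ge> 1" "k \<le> m"
  shows "\<exists>y\<ge>1. cf_mobius a m z = cf_mobius a k y"
  using assms(3,2)
proof (induction m arbitrary: z rule: dec_induct)
  case (step m)
  have "real_of_int (a (Suc m)) + 1 / z \<ge> 1"
    using cf_digitsD[OF assms(1), of "Suc m"] step.prems by (simp add: add_increasing2)
  with step.IH show ?case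
    using cf_mobius_Suc[OF assms(1)] step.prems by fastforce
qed blast

lemma cf_conv_dist:
  assumes "cf_digits a" "k \<le> m"
  shows "\<bar>cf_conv a m - cf_conv a k\<bar> \<le> 1 / (real_of_int (cf_den a (Suc k)))^2"
proof (cases m)
  case (Suc m')
  show ?thesis
  proof (cases "k = m")
    case False
    with Suc assms(2) have "k \<le> m'" by simp
    moreover have "real_of_int (a (Suc m')) \<ge> 1" using cf_digitsD[OF assms(1), of "Suc m'"] by simp
    ultimately obtain y where "y \<ge> 1" "cf_conv a m = cf_mobius a k y"
      using cf_mobius_reach[OF assms(1)] cf_conv_eq_mobius Suc by metis
    then show ?thesis using cf_mobius_conv_dist[OF assms(1)] by simp
  qed simp
qed (use assms in simp)

lemma inverse_cf_den_sq_le: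
  assumes "cf_digits a" "k \<ge> 1"
  shows "1 / (real_of_int (cf_den a (Suc k)))^2 \<le> 1 / real k"
proof -
  define C where "C = real_of_int (cf_den a (Suc k))"
  have "C \<ge> real k" "C \<ge> 1"
    unfolding C_def using cf_den_Suc_ge[OF assms(1), of k] cf_den_Suc_real_ge_1[OF assms(1), of k] by linarith+
  moreover have "C * 1 \<le> C * C" using \<open>C \<ge> 1\<close> by (intro mult_left_mono) auto
  ultimately have "real k \<le> C^2" unfolding power2_eq_square by linarith
  then show ?thesis unfolding C_def using assms(2) by (simp add: frac_le)
qed

lemma Cauchy_cf_conv:
  assumes "cf_digits a"
  shows "Cauchy (cf_conv a)"
proof (rule metric_CauchyI)
  fix e :: real assume e: "e > 0"
  obtain M0 :: nat where M0: "real M0 > 2 / e" using reals_Archimedean2 by blast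
  define M where "M = Suc M0"
  have "1 / real M < e / 2" using M0 e unfolding M_def by (simp add: field_simps)
  then have close: "\<bar>cf_conv a m - cf_conv a M\<bar> < e / 2" if "m \<ge> M" for m
    using cf_conv_dist[OF assms that] inverse_cf_den_sq_le[OF assms, of M] unfolding M_def by linarith
  show "\<exists>M. \<forall>m\<ge>M. \<forall>n\<ge>M. dist (cf_conv a m) (cf_conv a n) < e"
  proof (intro exI allI impI)
    fix m n assume "m \<ge> M" "n \<ge> M"
    with close[of m] close[of n] show "dist (cf_conv a m) (cf_conv a n) < e"
      unfolding dist_real_def by arith
  qed
qed

definition cf_value :: "(nat \<Rightarrow> int) \<Rightarrow> real" where
  "cf_value a = lim (cf_conv a)"

lemma cf_conv_LIMSEQ: "cf_digits a \<Longrightarrow> cf_conv a \<longlonglongrightarrow> cf_value a"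
  unfolding cf_value_def using Cauchy_cf_conv Cauchy_convergent convergent_LIMSEQ_iff by blast

lemma cf_conv_LIMSEQ_criterion:
  assumes "cf_digits a" "\<And>k. \<bar>x - cf_conv a k\<bar> \<le> 1 / (real_of_int (cf_den a (Suc k)))^2"
  shows "cf_conv a \<longlonglongrightarrow> x"
proof -
  have "\<forall>\<^sub>F k in sequentially. norm (cf_conv a k - x) \<le> 1 / real k"
    unfolding eventually_sequentially
    using assms(2) inverse_cf_den_sq_le[OF assms(1)] by (metis abs_minus_commute order_trans real_norm_def)
  then have "(\<lambda>k. cf_conv a k - x) \<longlonglongrightarrow> 0"
    by (rule Lim_null_comparison) (rule lim_1_over_n)
  then show ?thesis by (simp add: LIMSEQ_iff_nz dist_real_def tendsto_iff)
qed

lemma cf_conv_bounds: "cf_digits c \<Longrightarrow> c 0 \<le> cf_conv c k \<and> cf_conv c k \<le> c 0 + 1"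
proof (induction k arbitrary: c)
  case (Suc k)
  have "c 1 \<ge> 1" using cf_digitsD[OF Suc.prems] by simp
  moreover have "c 1 \<le> cf_conv (cf_shift c 1) k"
    using Suc.IH[OF cf_digits_shift[OF Suc.prems, of 1]] by simp
  ultimately have "cf_conv (cf_shift c 1) k \<ge> 1" by linarith
  then show ?case using cf_conv_Suc_shift[OF Suc.prems, of k] by simp
qed simp

lemma cf_value_bounds: "cf_digits c \<Longrightarrow> c 0 \<le> cf_value c \<and> cf_value c \<le> c 0 + 1"
  using tendsto_lowerbound[OF cf_conv_LIMSEQ, of c "c 0"] tendsto_upperbound[OF cf_conv_LIMSEQ, of c "c 0 + 1"]
    cf_conv_bounds[of c] by simp

lemma cf_value_shift:
  assumes "cf_digits a"
  shows "cf_value a = a 0 + 1 / cf_value (cf_shift a 1)"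
proof -
  have v: "cf_digits (cf_shift a 1)" using cf_digits_shift[OF assms] .
  have "cf_value (cf_shift a 1) \<ge> 1" using cf_value_bounds[OF v] cf_digitsD[OF assms, of 1] by simp
  then have "(\<lambda>k. a 0 + 1 / cf_conv (cf_shift a 1) k) \<longlonglongrightarrow> a 0 + 1 / cf_value (cf_shift a 1)"
    by (intro tendsto_intros cf_conv_LIMSEQ[OF v]) auto
  moreover have "(\<lambda>k. cf_conv a (Suc k)) \<longlonglongrightarrow> cf_value a"
    using cf_conv_LIMSEQ[OF assms] by (rule LIMSEQ_Suc)
  ultimately show ?thesis
    using cf_conv_Suc_shift[OF assms] LIMSEQ_unique by simp
qed

definition cf_tail :: "(nat \<Rightarrow> int) \<Rightarrow> nat \<Rightarrow> real" where
  "cf_tail a i = cf_value (cf_shift a i)"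

lemma cf_tail_rec: "cf_digits a \<Longrightarrow> cf_tail a i = a i + 1 / cf_tail a (Suc i)"
  unfolding cf_tail_def using cf_value_shift[OF cf_digits_shift[of a i]]
  by (simp add: cf_shift_def add.commute add.left_commute)

lemma cf_tail_bounds: "cf_digits a \<Longrightarrow> a i \<le> cf_tail a i \<and> cf_tail a i \<le> a i + 1"
  unfolding cf_tail_def using cf_value_bounds[OF cf_digits_shift[of a i]] by simp

lemma cf_tail_ge_1: "cf_digits a \<Longrightarrow> i \<ge> 1 \<Longrightarrow> cf_tail a i \<ge> 1"
  using cf_tail_bounds[of a i] cf_digitsD[of a i] by force

lemma cf_value_mobius:
  assumes "cf_digits a"
  shows "cf_value a = cf_mobius a k (cf_tail a (Suc k))"
proof (induction k)
  case 0
  show ?case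
    using cf_tail_ge_1[OF assms, of 1] cf_mobius_0[of "cf_tail a 1" a] cf_tail_rec[OF assms, of 0]
    by (simp add: cf_tail_def cf_shift_def)
next
  case (Suc k)
  have "cf_tail a (Suc (Suc k)) > 0" using cf_tail_ge_1[OF assms, of "Suc (Suc k)"] by simp
  then show ?case using Suc cf_mobius_Suc[OF assms] cf_tail_rec[OF assms, of "Suc k"] by simp
qed

lemma cf_den_approx_bounds:
  assumes "cf_digits a"
  shows "0 < \<bar>real_of_int (cf_den a (Suc k)) * cf_value a - real_of_int (cf_num a (Suc k))\<bar> \<and>
         \<bar>real_of_int (cf_den a (Suc k)) * cf_value a - real_of_int (cf_num a (Suc k))\<bar> \<le> 1 / real_of_int (cf_den a (Suc k))"
proof -
  define C where "C = real_of_int (cf_den a (Suc k))"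
  define D where "D = real_of_int (cf_den a k)"
  define x where "x = cf_tail a (Suc k)"
  have C1: "C \<ge> 1" unfolding C_def using cf_den_Suc_real_ge_1[OF assms] .
  have x1: "x \<ge> 1" unfolding x_def using cf_tail_ge_1[OF assms] by simp
  have "C * 1 \<le> C * x" using C1 x1 by (intro mult_left_mono) auto
  then have d: "C \<le> C * x + D" using cf_den_real_nonneg[OF assms, of k] unfolding D_def by linarith
  have "C * cf_value a - real_of_int (cf_num a (Suc k)) = C * (cf_value a - cf_conv a k)"
    using C1 unfolding cf_conv_def C_def by (simp add: field_simps)
  also have "\<dots> = (-1) ^ k / (C * x + D)"
    using cf_mobius_minus_conv[OF assms, of x k] x1 cf_value_mobius[OF assms, of k] C1
    unfolding C_def D_def x_def by simp
  finally have "\<bar>C * cf_value a - real_of_int (cf_num a (Suc k))\<bar> = 1 / (C * x + D)"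
    using C1 d by (simp add: abs_mult power_abs)
  moreover have "1 / (C * x + D) \<le> 1 / C" using C1 d by (simp add: frac_le)
  moreover have "0 < C * x + D" using C1 d by linarith
  ultimately show ?thesis unfolding C_def by simp
qed

lemma cf_value_irrational:
  assumes "cf_digits a"
  shows "cf_value a \<notin> \<rat>"
proof
  assume "cf_value a \<in> \<rat>"
  then obtain r s where rs: "s > 0" "cf_value a = of_int r / of_int s" by (rule Rats_cases')
  define k where "k = nat s + 1"
  define C where "C = cf_den a (Suc k)"
  have "real_of_int C > real_of_int s"
    using cf_den_Suc_ge[OF assms, of k] rs(1) unfolding k_def C_def by linarith
  define z where "z = C * r - cf_num a (Suc k) * s"
  have "real_of_int z = real_of_int s * (real_of_int C * cf_value a - real_of_int (cf_num a (Suc k)))"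
    using rs unfolding z_def by (simp add: field_simps)
  then have za: "\<bar>real_of_int z\<bar> = real_of_int s * \<bar>real_of_int C * cf_value a - real_of_int (cf_num a (Suc k))\<bar>"
    using rs(1) by (simp add: abs_mult)
  have "0 < \<bar>real_of_int z\<bar>" using za cf_den_approx_bounds[OF assms, of k] rs(1) unfolding C_def by simp
  moreover have "\<bar>real_of_int z\<bar> \<le> real_of_int s * (1 / real_of_int C)"
    unfolding za using cf_den_approx_bounds[OF assms, of k] rs(1) unfolding C_def by (intro mult_left_mono) auto
  moreover have "real_of_int s * (1 / real_of_int C) < 1"
    using \<open>real_of_int C > real_of_int s\<close> rs(1) by (simp add: field_simps)
  ultimately have "0 < \<bar>z\<bar>" "\<bar>z\<bar> < 1" by linarith+
  then show False by linarith
qed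

lemma cf_tail_irrational: "cf_digits a \<Longrightarrow> cf_tail a i \<notin> \<rat>"
  unfolding cf_tail_def using cf_value_irrational cf_digits_shift by blast

definition gauss_iter :: "real \<Rightarrow> nat \<Rightarrow> real" where
  "gauss_iter \<xi> i = ((\<lambda>x. 1 / (x - of_int \<lfloor>x\<rfloor>)) ^^ i) \<xi>"

lemma gauss_iter_Suc: "gauss_iter \<xi> (Suc i) = 1 / (gauss_iter \<xi> i - of_int \<lfloor>gauss_iter \<xi> i\<rfloor>)"
  by (simp add: gauss_iter_def)

lemma frac_irrational_bounds:
  assumes "(x::real) \<notin> \<rat>"
  shows "0 < x - of_int \<lfloor>x\<rfloor> \<and> x - of_int \<lfloor>x\<rfloor> < 1"
proof -
  have "x \<noteq> of_int \<lfloor>x\<rfloor>" using assms by (metis Rats_of_int)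
  then show ?thesis by linarith
qed

lemma gauss_iter_props:
  assumes "\<xi> \<notin> \<rat>"
  shows "gauss_iter \<xi> i \<notin> \<rat> \<and> gauss_iter \<xi> (Suc i) > 1"
proof (induction i)
  case 0
  then show ?case using frac_irrational_bounds[OF assms] assms by (simp add: gauss_iter_def)
next
  case (Suc i)
  have "gauss_iter \<xi> (Suc i) \<notin> \<rat>"
  proof
    assume "gauss_iter \<xi> (Suc i) \<in> \<rat>"
    then have "1 / gauss_iter \<xi> (Suc i) \<in> \<rat>" by simp
    then have "gauss_iter \<xi> i - of_int \<lfloor>gauss_iter \<xi> i\<rfloor> \<in> \<rat>" by (simp add: gauss_iter_Suc)
    then have "gauss_iter \<xi> i \<in> \<rat>" by (metis Rats_add Rats_of_int diff_add_cancel)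
    with Suc show False by simp
  qed
  with frac_irrational_bounds[of "gauss_iter \<xi> (Suc i)"] show ?case
    by (simp add: gauss_iter_Suc[of \<xi> "Suc i"])
qed

lemma gauss_iter_rec:
  assumes "\<xi> \<notin> \<rat>"
  shows "gauss_iter \<xi> i = of_int \<lfloor>gauss_iter \<xi> i\<rfloor> + 1 / gauss_iter \<xi> (Suc i)"
  using gauss_iter_props[OF assms, of i] by (simp add: gauss_iter_Suc)

lemma cf_expansion_exists:
  assumes "\<xi> \<notin> \<rat>"
  obtains a where "cf_digits a" "cf_value a = \<xi>"
proof
  define a where "a = (\<lambda>i. \<lfloor>gauss_iter \<xi> i\<rfloor>)"
  have "gauss_iter \<xi> k > 1" if "k \<ge> 1" for k
    using gauss_iter_props[OF assms, of "k - 1"] that by simp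
  then show va: "cf_digits a"
    unfolding cf_digits_def a_def by (simp add: le_floor_iff less_imp_le)
  have m: "\<xi> = cf_mobius a k (gauss_iter \<xi> (Suc k))" for k
  proof (induction k)
    case 0
    have "gauss_iter \<xi> 0 = \<xi>" by (simp add: gauss_iter_def)
    then show ?case
      using cf_mobius_0[of "gauss_iter \<xi> 1" a] gauss_iter_rec[OF assms, of 0] gauss_iter_props[OF assms, of 0]
      by (simp add: a_def)
  next
    case (Suc k)
    have "gauss_iter \<xi> (Suc (Suc k)) > 0" using gauss_iter_props[OF assms, of "Suc k"] by simp
    then show ?case using Suc cf_mobius_Suc[OF va] gauss_iter_rec[OF assms, of "Suc k"] by (simp add: a_def)
  qed
  have "\<bar>\<xi> - cf_conv a k\<bar> \<le> 1 / (real_of_int (cf_den a (Suc k)))^2" for k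
    using m[of k] cf_mobius_conv_dist[OF va, of "gauss_iter \<xi> (Suc k)" k] gauss_iter_props[OF assms, of k]
    by simp
  then have "cf_conv a \<longlonglongrightarrow> \<xi>" using cf_conv_LIMSEQ_criterion[OF va] by blast
  then show "cf_value a = \<xi>" using cf_conv_LIMSEQ[OF va] LIMSEQ_unique by blast
qed


section \<open>The approximation quotient in the basis of consecutive convergents\<close>

text \<open>Since \<open>p\<^sub>jq\<^sub>j\<^sub>-\<^sub>1 - p\<^sub>j\<^sub>-\<^sub>1q\<^sub>j = \<plusminus>1\<close>, every fraction is \<open>(u p\<^sub>j + v p\<^sub>j\<^sub>-\<^sub>1) / (u q\<^sub>j + v q\<^sub>j\<^sub>-\<^sub>1)\<close>
  for unique integers \<open>u, v\<close>; \<open>den_ratio a j\<close> is \<open>q\<^sub>j\<^sub>-\<^sub>1 / q\<^sub>j\<close>.\<close>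

definition den_ratio :: "(nat \<Rightarrow> int) \<Rightarrow> nat \<Rightarrow> real" where
  "den_ratio a j = real_of_int (cf_den a j) / real_of_int (cf_den a (Suc j))"

definition basis_num :: "(nat \<Rightarrow> int) \<Rightarrow> nat \<Rightarrow> int \<Rightarrow> int \<Rightarrow> int" where
  "basis_num a j u v = u * cf_num a (Suc j) + v * cf_num a j"

definition basis_den :: "(nat \<Rightarrow> int) \<Rightarrow> nat \<Rightarrow> int \<Rightarrow> int \<Rightarrow> int" where
  "basis_den a j u v = u * cf_den a (Suc j) + v * cf_den a j"

definition lam_at :: "nat \<Rightarrow> (nat \<Rightarrow> int) \<Rightarrow> nat \<Rightarrow> int \<Rightarrow> int \<Rightarrow> real" where
  "lam_at n a j u v = lam_quot n (cf_value a) (basis_num a j u v) (basis_den a j u v)"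

lemma basis_coeffs_exist:
  obtains u v where "s = basis_num a j u v" "t = basis_den a j u v"
proof
  define e where "e = cf_num a (Suc j) * cf_den a j - cf_num a j * cf_den a (Suc j)"
  have ee: "e * e = 1"
    unfolding e_def cf_num_den_det by (simp flip: power_add power_mult_distrib)
  define u where "u = e * (s * cf_den a j - t * cf_num a j)"
  define v where "v = e * (t * cf_num a (Suc j) - s * cf_den a (Suc j))"
  have "basis_num a j u v = (e * e) * s" "basis_den a j u v = (e * e) * t"
    unfolding basis_num_def basis_den_def u_def v_def e_def by (simp_all add: algebra_simps)
  then show "s = basis_num a j u v" "t = basis_den a j u v" using ee by simp_all
qed

lemma den_ratio_bounds: "cf_digits a \<Longrightarrow> 0 \<le> den_ratio a j \<and> den_ratio a j \<le> 1"
  unfolding den_ratio_def using cf_den_real_nonneg[of a j] cf_den_Suc_real_ge_1[of a j] cf_den_le_Suc[of a j]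
  by (simp add: divide_le_eq_1)

lemma den_ratio_Suc:
  assumes "cf_digits a"
  shows "den_ratio a (Suc j) = 1 / (a (Suc j) + den_ratio a j)"
  unfolding den_ratio_def using cf_den_Suc_real_ge_1[OF assms, of j] by (simp add: field_simps)

lemma basis_den_eq:
  "cf_digits a \<Longrightarrow> real_of_int (basis_den a j u v) = real_of_int (cf_den a (Suc j)) * (u + v * den_ratio a j)"
  unfolding basis_den_def den_ratio_def using cf_den_Suc_real_ge_1[of a j] by (simp add: field_simps)

lemma basis_den_pos:
  assumes "cf_digits a" "u + v * den_ratio a j > 0"
  shows "basis_den a j u v > 0"
proof -
  have "real_of_int (cf_den a (Suc j)) > 0" using cf_den_Suc_real_ge_1[OF assms(1), of j] by linarith
  then have "real_of_int (basis_den a j u v) > 0" using basis_den_eq[OF assms(1), of j u v] assms(2) by simp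
  then show ?thesis by simp
qed

lemma basis_den_bracket:
  assumes "cf_digits a"
    and "cf_den a (Suc j) \<le> basis_den a j u v" "basis_den a j u v < cf_den a (Suc (Suc j))"
  shows "1 \<le> u + v * den_ratio a j \<and> u + v * den_ratio a j < a (Suc j) + den_ratio a j"
proof -
  define C where "C = real_of_int (cf_den a (Suc j))"
  have C: "C \<ge> 1" unfolding C_def using cf_den_Suc_real_ge_1[OF assms(1)] .
  have "real_of_int (cf_den a (Suc (Suc j))) = C * (a (Suc j) + den_ratio a j)"
    unfolding C_def den_ratio_def using C unfolding C_def by (simp add: field_simps)
  with assms basis_den_eq[OF assms(1), of j u v]
  have "C * 1 \<le> C * (u + v * den_ratio a j)" "C * (u + v * den_ratio a j) < C * (a (Suc j) + den_ratio a j)"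
    unfolding C_def by linarith+
  with C show ?thesis by (simp add: mult_le_cancel_left mult_less_cancel_left)
qed

lemma basis_den_large:
  assumes va: "cf_digits a" and w: "u + v * den_ratio a j \<ge> 1/2"
  shows "basis_den a j u v > 0 \<and> (real_of_int (basis_den a j u v))^2 \<ge> real j / 2"
proof -
  define t where "t = real_of_int (basis_den a j u v)"
  have tp: "basis_den a j u v > 0" using basis_den_pos[OF va] w by simp
  have "real_of_int (cf_den a (Suc j)) * (1/2) \<le> t"
    unfolding t_def basis_den_eq[OF va] using w cf_den_Suc_real_ge_1[OF va, of j] by (intro mult_left_mono) auto
  then have "real j / 2 \<le> t" using cf_den_Suc_ge[OF va, of j] by linarith
  moreover have "t * 1 \<le> t * t" using tp unfolding t_def by (intro mult_left_mono) auto
  ultimately show ?thesis using tp unfolding t_def power2_eq_square by linarith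
qed

lemma gcd_int_nat_bounds:
  assumes "n > 0"
  shows "1 \<le> real_of_int (gcd t (int n)) \<and> real_of_int (gcd t (int n)) \<le> real n"
proof -
  have "gcd t (int n) > 0" "gcd t (int n) \<le> int n" using assms by (simp_all add: gcd_le2_int)
  then show ?thesis by (simp del: of_int_le_iff add: int_one_le_iff_zero_less)
qed

text \<open>In this basis, the quotient depends on the expansion only through \<open>gcd(t, n)\<close>, the complete
  quotient \<open>\<alpha>\<^sub>j\<^sub>+\<^sub>1\<close> and \<open>\<beta>\<^sub>j = q\<^sub>j\<^sub>-\<^sub>1/q\<^sub>j\<close>, i.e. on digits near position \<open>j\<close> and on \<open>q\<^sub>j, q\<^sub>j\<^sub>-\<^sub>1 mod n\<close>.\<close>

lemma basis_approx_error:
  assumes "cf_digits a"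
  shows "\<bar>real_of_int (basis_den a j u v) * cf_value a - real_of_int (basis_num a j u v)\<bar> =
    \<bar>u - v * cf_tail a (Suc j)\<bar> / (real_of_int (cf_den a (Suc j)) * cf_tail a (Suc j) + real_of_int (cf_den a j))"
proof -
  define A B C D where "A = real_of_int (cf_num a (Suc j))" "B = real_of_int (cf_num a j)"
    "C = real_of_int (cf_den a (Suc j))" "D = real_of_int (cf_den a j)"
  define x where "x = cf_tail a (Suc j)"
  have den: "C * x + D > 0"
    unfolding A_B_C_D_def x_def using cf_mobius_denom_pos[OF assms] cf_tail_ge_1[OF assms, of "Suc j"] by simp
  have "\<bar>- (A * D - B * C)\<bar> = 1"
    using arg_cong[OF cf_num_den_det[of a j], of real_of_int] unfolding A_B_C_D_def
    by (simp add: abs_mult power_abs)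
  moreover have "cf_value a = (A * x + B) / (C * x + D)"
    using cf_value_mobius[OF assms, of j] unfolding cf_mobius_def A_B_C_D_def x_def by simp
  moreover have "real_of_int (basis_den a j u v) = C * u + v * D" "real_of_int (basis_num a j u v) = u * A + v * B"
    unfolding basis_den_def basis_num_def A_B_C_D_def by simp_all
  moreover have "(C * u + v * D) * ((A * x + B) / (C * x + D)) - (u * A + v * B)
      = - (A * D - B * C) * (u - v * x) / (C * x + D)"
  proof -
    have "(C * u + v * D) * ((A * x + B) / (C * x + D)) - (u * A + v * B)
        = ((C * u + v * D) * (A * x + B) - (u * A + v * B) * (C * x + D)) / (C * x + D)"
      using den by (simp add: field_simps)
    also have "(C * u + v * D) * (A * x + B) - (u * A + v * B) * (C * x + D) = - (A * D - B * C) * (u - v * x)"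
      by (simp add: algebra_simps)
    finally show ?thesis .
  qed
  ultimately show ?thesis
    using den unfolding x_def[symmetric] A_B_C_D_def[symmetric] by (simp only: abs_mult abs_divide)
qed

lemma lam_at_formula:
  assumes "cf_digits a" "u + v * den_ratio a j > 0"
  shows "lam_at n a j u v = real_of_int (gcd (basis_den a j u v) (int n)) * (cf_tail a (Suc j) + den_ratio a j) /
            \<bar>(u + v * den_ratio a j) * (u - v * cf_tail a (Suc j))\<bar>"
proof -
  define C D where "C = real_of_int (cf_den a (Suc j))" "D = real_of_int (cf_den a j)"
  define x w where "x = cf_tail a (Suc j)" "w = u + v * den_ratio a j"
  define s t where "s = real_of_int (basis_num a j u v)" "t = real_of_int (basis_den a j u v)"
  have C1: "C \<ge> 1" unfolding C_D_def using cf_den_Suc_real_ge_1[OF assms(1)] .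
  have den: "C * x + D > 0"
    unfolding C_D_def x_w_def using cf_mobius_denom_pos[OF assms(1)] cf_tail_ge_1[OF assms(1), of "Suc j"] by simp
  have bet: "den_ratio a j = D / C" unfolding den_ratio_def C_D_def by simp
  have t: "t = C * w" unfolding s_t_def x_w_def using basis_den_eq[OF assms(1)] C_D_def by simp
  have wp: "w > 0" using assms(2) unfolding x_w_def .
  have tp: "t > 0" unfolding t using C1 wp by simp
  have "s / t - cf_value a = - (t * cf_value a - s) / t" using tp by (simp add: field_simps)
  then have "t\<^sup>2 * \<bar>s / t - cf_value a\<bar> = t * \<bar>t * cf_value a - s\<bar>"
    using tp by (simp add: abs_divide power2_eq_square)
  also have "\<dots> = C * w * (\<bar>u - v * x\<bar> / (C * x + D))"
    using basis_approx_error[OF assms(1), of j u v] t unfolding s_t_def C_D_def x_w_def by simp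
  finally have "lam_at n a j u v = real_of_int (gcd (basis_den a j u v) (int n)) / (C * w * (\<bar>u - v * x\<bar> / (C * x + D)))"
    unfolding lam_at_def lam_quot_def s_t_def by simp
  also have "\<dots> = real_of_int (gcd (basis_den a j u v) (int n)) * (x + D / C) / (w * \<bar>u - v * x\<bar>)"
    using C1 den by (simp add: field_simps)
  finally show ?thesis unfolding bet[symmetric] x_w_def using wp[unfolded x_w_def] by (simp add: abs_mult)
qed

lemma lam_at_1_0_ge:
  assumes "cf_digits a" "n > 0"
  shows "lam_at n a j 1 0 \<ge> cf_tail a (Suc j)"
proof -
  have "lam_at n a j 1 0 = real_of_int (gcd (basis_den a j 1 0) (int n)) * (cf_tail a (Suc j) + den_ratio a j)"
    using lam_at_formula[OF assms(1), of 1 0 j n] by simp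
  moreover have "cf_tail a (Suc j) \<le> 1 * (cf_tail a (Suc j) + den_ratio a j)"
    using den_ratio_bounds[OF assms(1)] by simp
  moreover have "1 * (cf_tail a (Suc j) + den_ratio a j)
      \<le> real_of_int (gcd (basis_den a j 1 0) (int n)) * (cf_tail a (Suc j) + den_ratio a j)"
    using den_ratio_bounds[OF assms(1), of j] cf_tail_ge_1[OF assms(1), of "Suc j"] gcd_int_nat_bounds[OF assms(2)]
    by (intro mult_right_mono) auto
  ultimately show ?thesis by linarith
qed

lemma lam_quot_mult_dist_le:
  assumes "n > 0"
  shows "lam_quot n \<xi> s t * ((real_of_int t)^2 * \<bar>real_of_int s / real_of_int t - \<xi>\<bar>) \<le> real n"
  unfolding lam_quot_def using gcd_int_nat_bounds[OF assms, of t] by (cases "t = 0 \<or> s / t = \<xi>") auto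

section \<open>\<open>\<lambda>\<^sub>n\<close> as a limit superior\<close>

definition near_fracs :: "real \<Rightarrow> real \<Rightarrow> (int \<times> int) set" where
  "near_fracs \<xi> \<epsilon> = {(s, t). t > 0 \<and> real_of_int s / real_of_int t \<noteq> \<xi> \<and>
        \<bar>real_of_int s / real_of_int t - \<xi>\<bar> < \<epsilon>}"

lemma lambda_n_near_fracs:
  "lambda_n n \<xi> = (INF \<epsilon>\<in>{0<..}. SUP st\<in>near_fracs \<xi> \<epsilon>. ereal (lam_quot n \<xi> (fst st) (snd st)))"
  unfolding lambda_n_def near_fracs_def by simp

lemma lambda_n_le_ereal:
  assumes "\<epsilon> > 0"
    "\<And>s t. t > 0 \<Longrightarrow> \<bar>real_of_int s / real_of_int t - \<xi>\<bar> < \<epsilon> \<Longrightarrow> lam_quot n \<xi> s t \<le> y"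
  shows "lambda_n n \<xi> \<le> ereal y"
proof -
  have "lambda_n n \<xi> \<le> (SUP st\<in>near_fracs \<xi> \<epsilon>. ereal (lam_quot n \<xi> (fst st) (snd st)))"
    unfolding lambda_n_near_fracs by (rule INF_lower) (use assms(1) in simp)
  also have "\<dots> \<le> ereal y"
    using assms(2) by (intro SUP_least) (auto simp: near_fracs_def)
  finally show ?thesis .
qed

lemma ereal_le_lambda_n:
  assumes "\<And>\<epsilon>. \<epsilon> > 0 \<Longrightarrow> \<exists>s t. t > 0 \<and> real_of_int s / real_of_int t \<noteq> \<xi> \<and>
      \<bar>real_of_int s / real_of_int t - \<xi>\<bar> < \<epsilon> \<and> lam_quot n \<xi> s t \<ge> y"
  shows "ereal y \<le> lambda_n n \<xi>"
  unfolding lambda_n_near_fracs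
proof (rule INF_greatest)
  fix \<epsilon> :: real assume "\<epsilon> \<in> {0<..}"
  then obtain s t where "(s, t) \<in> near_fracs \<xi> \<epsilon>" "lam_quot n \<xi> s t \<ge> y"
    using assms unfolding near_fracs_def by force
  then show "ereal y \<le> (SUP st\<in>near_fracs \<xi> \<epsilon>. ereal (lam_quot n \<xi> (fst st) (snd st)))"
    by (intro SUP_upper2) auto
qed

lemma lambda_n_lessD:
  assumes "lambda_n n \<xi> < ereal z"
  obtains \<epsilon> where "\<epsilon> > 0" "\<And>s t. t > 0 \<Longrightarrow> real_of_int s / real_of_int t \<noteq> \<xi> \<Longrightarrow>
      \<bar>real_of_int s / real_of_int t - \<xi>\<bar> < \<epsilon> \<Longrightarrow> lam_quot n \<xi> s t < z"
proof -
  obtain \<epsilon> where e: "\<epsilon> > 0" "(SUP st\<in>near_fracs \<xi> \<epsilon>. ereal (lam_quot n \<xi> (fst st) (snd st))) < ereal z"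
    using assms unfolding lambda_n_near_fracs INF_less_iff by auto
  have "lam_quot n \<xi> s t < z" if "(s, t) \<in> near_fracs \<xi> \<epsilon>" for s t
    using order.strict_trans1[OF SUP_upper[OF that, of "\<lambda>st. ereal (lam_quot n \<xi> (fst st) (snd st))"] e(2)]
    by simp
  with e(1) show ?thesis using that unfolding near_fracs_def by blast
qed

lemma lambda_n_greaterD:
  assumes "ereal z < lambda_n n \<xi>" "\<epsilon> > 0"
  obtains s t where "t > 0" "real_of_int s / real_of_int t \<noteq> \<xi>"
    "\<bar>real_of_int s / real_of_int t - \<xi>\<bar> < \<epsilon>" "lam_quot n \<xi> s t > z"
proof -
  have "lambda_n n \<xi> \<le> (SUP st\<in>near_fracs \<xi> \<epsilon>. ereal (lam_quot n \<xi> (fst st) (snd st)))"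
    unfolding lambda_n_near_fracs by (rule INF_lower) (use assms(2) in simp)
  with assms(1) have "ereal z < (SUP st\<in>near_fracs \<xi> \<epsilon>. ereal (lam_quot n \<xi> (fst st) (snd st)))"
    by simp
  then obtain st where "st \<in> near_fracs \<xi> \<epsilon>" "ereal z < ereal (lam_quot n \<xi> (fst st) (snd st))"
    unfolding less_SUP_iff by blast
  then show ?thesis using that unfolding near_fracs_def by (cases st) auto
qed

lemma irrational_far_from_den:
  assumes "\<xi> \<notin> \<rat>" "t > 0"
  obtains \<epsilon> where "\<epsilon> > 0" "\<And>s. \<epsilon> \<le> \<bar>real_of_int s / real_of_int t - \<xi>\<bar>"
proof
  define y where "y = real_of_int t * \<xi>"
  have "y \<notin> \<rat>"
  proof
    assume "y \<in> \<rat>"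
    then have "y / real_of_int t \<in> \<rat>" by simp
    then show False using assms unfolding y_def by simp
  qed
  note f = frac_irrational_bounds[OF this]
  define d where "d = min (y - of_int \<lfloor>y\<rfloor>) (1 - (y - of_int \<lfloor>y\<rfloor>))"
  show "d / real_of_int t > 0" unfolding d_def using f assms(2) by simp
  fix s
  have "d \<le> \<bar>real_of_int s - y\<bar>"
  proof (cases "s \<le> \<lfloor>y\<rfloor>")
    case True
    then have "real_of_int s \<le> of_int \<lfloor>y\<rfloor>" by simp
    then show ?thesis unfolding d_def by linarith
  next
    case False
    then have "real_of_int s \<ge> of_int \<lfloor>y\<rfloor> + 1" by simp
    then show ?thesis unfolding d_def by linarith
  qed
  moreover have "real_of_int s / real_of_int t - \<xi> = (real_of_int s - y) / real_of_int t"
    unfolding y_def using assms(2) by (simp add: field_simps)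
  ultimately show "d / real_of_int t \<le> \<bar>real_of_int s / real_of_int t - \<xi>\<bar>"
    using assms(2) by (simp add: abs_divide divide_right_mono)
qed

lemma irrational_far_from_small_dens:
  assumes "\<xi> \<notin> \<rat>"
  obtains \<epsilon> where "\<epsilon> > 0" "\<And>s t. 0 < t \<Longrightarrow> t < int T \<Longrightarrow> \<epsilon> \<le> \<bar>real_of_int s / real_of_int t - \<xi>\<bar>"
proof (induction T arbitrary: thesis)
  case 0
  show ?case by (rule "0"[of 1]) auto
next
  case (Suc T)
  obtain e1 where e1: "e1 > 0" "\<And>s t. 0 < t \<Longrightarrow> t < int T \<Longrightarrow> e1 \<le> \<bar>real_of_int s / real_of_int t - \<xi>\<bar>"
    using Suc.IH by blast
  show ?case
  proof (cases "T = 0")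
    case True
    show ?thesis by (rule Suc.prems[of 1]) (use True in auto)
  next
    case False
    then obtain e2 where e2: "e2 > 0" "\<And>s. e2 \<le> \<bar>real_of_int s / real_of_int (int T) - \<xi>\<bar>"
      using irrational_far_from_den[OF assms, of "int T"] by auto
    show ?thesis
    proof (rule Suc.prems[of "min e1 e2"])
      fix s t :: int assume "0 < t" "t < int (Suc T)"
      then consider "t < int T" | "t = int T" by linarith
      then show "min e1 e2 \<le> \<bar>real_of_int s / real_of_int t - \<xi>\<bar>"
      proof cases
        case 1
        then show ?thesis using e1(2)[of t s] \<open>0 < t\<close> by linarith
      next
        case 2
        then show ?thesis using e2(2)[of s] by (simp add: min.coboundedI2)
      qed
    qed (use e1 e2 in simp)
  qed
qed

lemma cf_den_bracket:
  assumes "cf_digits a" "t \<ge> cf_den a (Suc J)"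
  obtains j where "j \<ge> J" "cf_den a (Suc j) \<le> t" "t < cf_den a (Suc (Suc j))"
proof -
  define P where "P = (\<lambda>j. t < cf_den a (Suc (Suc j)))"
  have "P (nat t)" unfolding P_def using cf_den_Suc_ge[OF assms(1), of "Suc (nat t)"] by linarith
  define j where "j = (LEAST j. P j)"
  have Pj: "P j" unfolding j_def by (rule LeastI) fact
  have "j \<ge> J"
  proof (rule ccontr)
    assume "\<not> j \<ge> J"
    then have "Suc (Suc j) \<le> Suc J" by simp
    then have "cf_den a (Suc (Suc j)) \<le> cf_den a (Suc J)" using cf_den_mono[OF assms(1)] by blast
    then show False using Pj assms(2) unfolding P_def by linarith
  qed
  moreover have "cf_den a (Suc j) \<le> t"
  proof (cases j)
    case 0
    then show ?thesis using cf_den_Suc_pos[OF assms(1), of J] assms(2) by simp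
  next
    case (Suc i)
    then have "\<not> P i" unfolding j_def using not_less_Least by (metis lessI)
    then show ?thesis using Suc unfolding P_def by simp
  qed
  ultimately show ?thesis using that Pj unfolding P_def by blast
qed

lemma near_cf_value_bracket:
  assumes "cf_digits a"
  obtains \<epsilon> where "\<epsilon> > 0" "\<And>s t. t > 0 \<Longrightarrow> \<bar>real_of_int s / real_of_int t - cf_value a\<bar> < \<epsilon> \<Longrightarrow>
      \<exists>j\<ge>J. cf_den a (Suc j) \<le> t \<and> t < cf_den a (Suc (Suc j))"
proof -
  obtain \<epsilon> where e: "\<epsilon> > 0" "\<And>s t. 0 < t \<Longrightarrow> t < int (nat (cf_den a (Suc J))) \<Longrightarrow>
      \<epsilon> \<le> \<bar>real_of_int s / real_of_int t - cf_value a\<bar>"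
    using irrational_far_from_small_dens[OF cf_value_irrational[OF assms]] by blast
  have "\<exists>j\<ge>J. cf_den a (Suc j) \<le> t \<and> t < cf_den a (Suc (Suc j))"
    if "t > 0" "\<bar>real_of_int s / real_of_int t - cf_value a\<bar> < \<epsilon>" for s t
  proof -
    have "t \<ge> cf_den a (Suc J)"
    proof (rule ccontr)
      assume "\<not> t \<ge> cf_den a (Suc J)"
      then have "t < int (nat (cf_den a (Suc J)))" by simp
      then show False using e(2)[of t s] that by linarith
    qed
    then show ?thesis using cf_den_bracket[OF assms] by blast
  qed
  with e(1) show ?thesis using that by blast
qed

lemma frac_ne_cf_value: "cf_digits a \<Longrightarrow> real_of_int s / real_of_int t \<noteq> cf_value a"
  using cf_value_irrational by (metis Rats_divide Rats_of_int)

definition coeff_bound :: "nat \<Rightarrow> real \<Rightarrow> real" where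
  "coeff_bound n M = 2 * (M + 1) + 2 * real n * (M + 2)"

lemma coeff_bound_nonneg: "M \<ge> 0 \<Longrightarrow> coeff_bound n M \<ge> 0"
  unfolding coeff_bound_def by simp

lemma lam_quot_large_imp_basis_coeffs:
  assumes va: "cf_digits a" and n: "n > 0"
    and t: "cf_den a (Suc j) \<le> t" "t < cf_den a (Suc (Suc j))"
    and M: "real_of_int (a (Suc j)) \<le> M"
    and lq: "lam_quot n (cf_value a) s t \<ge> 1/2"
  obtains u v where "s = basis_num a j u v" "t = basis_den a j u v"
    "\<bar>real_of_int u\<bar> \<le> coeff_bound n M" "\<bar>real_of_int v\<bar> \<le> coeff_bound n M" "u + v * den_ratio a j \<ge> 1"
proof -
  obtain u v where su: "s = basis_num a j u v" and tu: "t = basis_den a j u v"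
    using basis_coeffs_exist by metis
  define w where "w = u + v * den_ratio a j"
  define x where "x = cf_tail a (Suc j)"
  define b where "b = den_ratio a j"
  define g where "g = real_of_int (gcd t (int n))"
  define z where "z = u - v * x"
  have w: "1 \<le> w" "w \<le> M + 1"
    using basis_den_bracket[OF va t[unfolded tu]] M den_ratio_bounds[OF va, of j] unfolding w_def by auto
  have b: "0 \<le> b" "b \<le> 1" unfolding b_def using den_ratio_bounds[OF va] by auto
  have xb: "1 \<le> x + b" "x + b \<le> M + 2"
    using cf_tail_ge_1[OF va, of "Suc j"] cf_tail_bounds[OF va, of "Suc j"] M b unfolding x_def by auto
  have lf: "lam_quot n (cf_value a) s t = g * (x + b) / \<bar>w * z\<bar>"
    using lam_at_formula[OF va, of u v j n] w unfolding lam_at_def su[symmetric] tu[symmetric]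
      w_def x_def b_def z_def g_def by simp
  have zb: "\<bar>z\<bar> \<le> 2 * real n * (M + 2)"
  proof (cases "z = 0")
    case False
    then have "0 < \<bar>w * z\<bar>" using w by simp
    with lq lf have "\<bar>w * z\<bar> \<le> 2 * (g * (x + b))"
      by (simp add: field_simps)
    also have "\<dots> \<le> 2 * (real n * (M + 2))"
      using gcd_int_nat_bounds[OF n, of t] xb unfolding g_def by (intro mult_left_mono mult_mono) auto
    finally have "\<bar>w\<bar> * \<bar>z\<bar> \<le> 2 * real n * (M + 2)" by (simp add: abs_mult)
    moreover have "\<bar>z\<bar> \<le> \<bar>w\<bar> * \<bar>z\<bar>" using w by (simp add: mult_le_cancel_right1)
    ultimately show ?thesis by linarith
  qed (use xb in simp)
  have "\<bar>real_of_int v\<bar> \<le> \<bar>real_of_int v * (x + b)\<bar>"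
    using xb by (simp add: abs_mult mult_le_cancel_left1)
  also have "\<dots> = \<bar>w - z\<bar>" unfolding w_def z_def b_def by (simp add: algebra_simps)
  finally have vb: "\<bar>real_of_int v\<bar> \<le> M + 1 + 2 * real n * (M + 2)" using zb w by linarith
  have "\<bar>real_of_int v * b\<bar> \<le> \<bar>real_of_int v\<bar>" using b by (simp add: abs_mult mult_left_le)
  then have "\<bar>real_of_int u\<bar> \<le> coeff_bound n M"
    using vb w unfolding w_def b_def coeff_bound_def by (smt (verit))
  moreover have "\<bar>real_of_int v\<bar> \<le> coeff_bound n M" using vb w unfolding coeff_bound_def by (smt (verit))
  ultimately show ?thesis using that su tu w unfolding w_def by blast
qed

lemma lambda_n_le_of_lam_at_le:
  assumes va: "cf_digits a" and n: "n > 0" and y: "y \<ge> 1"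
    and dig: "\<And>j. j \<ge> J \<Longrightarrow> real_of_int (a (Suc j)) \<le> M"
    and bnd: "\<And>j u v. j \<ge> J \<Longrightarrow> \<bar>real_of_int u\<bar> \<le> coeff_bound n M \<Longrightarrow> \<bar>real_of_int v\<bar> \<le> coeff_bound n M \<Longrightarrow>
                u + v * den_ratio a j \<ge> 1 \<Longrightarrow> lam_at n a j u v \<le> y"
  shows "lambda_n n (cf_value a) \<le> ereal y"
proof -
  obtain \<epsilon> where e: "\<epsilon> > 0" "\<And>s t. t > 0 \<Longrightarrow> \<bar>real_of_int s / real_of_int t - cf_value a\<bar> < \<epsilon> \<Longrightarrow>
      \<exists>j\<ge>J. cf_den a (Suc j) \<le> t \<and> t < cf_den a (Suc (Suc j))"
    using near_cf_value_bracket[OF va] by blast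
  show ?thesis
  proof (rule lambda_n_le_ereal[OF e(1)])
    fix s t assume st: "t > 0" "\<bar>real_of_int s / real_of_int t - cf_value a\<bar> < \<epsilon>"
    show "lam_quot n (cf_value a) s t \<le> y"
    proof (rule ccontr)
      assume c: "\<not> lam_quot n (cf_value a) s t \<le> y"
      obtain j where j: "j \<ge> J" "cf_den a (Suc j) \<le> t" "t < cf_den a (Suc (Suc j))"
        using e(2)[OF st] by blast
      have "lam_quot n (cf_value a) s t \<ge> 1/2" using c y by simp
      then obtain u v where "s = basis_num a j u v" "t = basis_den a j u v" "\<bar>real_of_int u\<bar> \<le> coeff_bound n M"
          "\<bar>real_of_int v\<bar> \<le> coeff_bound n M" "u + v * den_ratio a j \<ge> 1"
        by (rule lam_quot_large_imp_basis_coeffs[OF va n j(2,3) dig[OF j(1)]])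
      with bnd[OF j(1)] c show False unfolding lam_at_def by simp
    qed
  qed
qed

lemma lambda_n_ge_of_lam_at_ge:
  assumes va: "cf_digits a" and n: "n > 0" and y: "y > 0"
    and io: "\<And>J. \<exists>j\<ge>J. \<exists>u v. u + v * den_ratio a j \<ge> 1/2 \<and> lam_at n a j u v \<ge> y"
  shows "ereal y \<le> lambda_n n (cf_value a)"
proof (rule ereal_le_lambda_n)
  fix \<epsilon> :: real assume e: "\<epsilon> > 0"
  obtain J :: nat where J: "real J > 2 * real n / (y * \<epsilon>)" using reals_Archimedean2 by blast
  have Jp: "real J > 0" using J n y e by (smt (verit) divide_pos_pos mult_pos_pos of_nat_0_less_iff)
  obtain j u v where j: "j \<ge> J" "u + v * den_ratio a j \<ge> 1/2" "lam_at n a j u v \<ge> y" using io by blast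
  define s where "s = basis_num a j u v"
  define t where "t = basis_den a j u v"
  define d where "d = \<bar>real_of_int s / real_of_int t - cf_value a\<bar>"
  have tb: "t > 0" "(real_of_int t)^2 \<ge> real j / 2" using basis_den_large[OF va j(2)] unfolding t_def by auto
  have ne: "real_of_int s / real_of_int t \<noteq> cf_value a" using frac_ne_cf_value[OF va] .
  have lq: "lam_quot n (cf_value a) s t \<ge> y" using j(3) unfolding lam_at_def s_def t_def .
  have "y * ((real_of_int t)^2 * d) \<le> lam_quot n (cf_value a) s t * ((real_of_int t)^2 * d)"
    using lq by (intro mult_right_mono) (auto simp: d_def)
  also have "\<dots> \<le> real n" unfolding d_def by (rule lam_quot_mult_dist_le[OF n])
  finally have "y * ((real_of_int t)^2 * d) \<le> real n" .
  moreover have "y * (real J / 2 * d) \<le> y * ((real_of_int t)^2 * d)"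
    using tb(2) j(1) y by (intro mult_left_mono mult_right_mono) (auto simp: d_def)
  ultimately have "d \<le> 2 * real n / (y * real J)" using y Jp by (simp add: field_simps)
  also have "\<dots> < \<epsilon>" using J y e Jp by (simp add: field_simps)
  finally show "\<exists>s t. t > 0 \<and> real_of_int s / real_of_int t \<noteq> cf_value a \<and>
      \<bar>real_of_int s / real_of_int t - cf_value a\<bar> < \<epsilon> \<and> lam_quot n (cf_value a) s t \<ge> y"
    using tb(1) ne lq unfolding d_def by blast
qed

lemma lam_at_eventually_less:
  assumes va: "cf_digits a" and n: "n > 0" and lam: "lambda_n n (cf_value a) < ereal z" and z: "z > 0"
  obtains J where "\<And>j u v. j \<ge> J \<Longrightarrow> u + v * den_ratio a j \<ge> 1/2 \<Longrightarrow> lam_at n a j u v < z"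
proof -
  obtain \<epsilon> where e: "\<epsilon> > 0" "\<And>s t. t > 0 \<Longrightarrow> real_of_int s / real_of_int t \<noteq> cf_value a \<Longrightarrow>
      \<bar>real_of_int s / real_of_int t - cf_value a\<bar> < \<epsilon> \<Longrightarrow> lam_quot n (cf_value a) s t < z"
    using lambda_n_lessD[OF lam] by blast
  obtain J :: nat where J: "real J > 2 * real n / (\<epsilon> * z)" using reals_Archimedean2 by blast
  have Jp: "real J > 0" using J n e z by (smt (verit) divide_pos_pos mult_pos_pos of_nat_0_less_iff)
  have "lam_at n a j u v < z" if j: "J \<le> j" and w: "u + v * den_ratio a j \<ge> 1/2" for j u v
  proof -
    define s where "s = basis_num a j u v"
    define t where "t = basis_den a j u v"
    define d where "d = \<bar>real_of_int s / real_of_int t - cf_value a\<bar>"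
    have tb: "t > 0" "(real_of_int t)^2 \<ge> real j / 2" using basis_den_large[OF va w] unfolding t_def by auto
    have "lam_quot n (cf_value a) s t < z"
    proof (cases "d < \<epsilon>")
      case True
      then show ?thesis using e(2) tb frac_ne_cf_value[OF va] unfolding d_def by blast
    next
      case False
      have "real J / 2 * \<epsilon> \<le> (real_of_int t)^2 * d"
        using tb(2) j False e(1) by (intro mult_mono) auto
      moreover have "lam_quot n (cf_value a) s t * ((real_of_int t)^2 * d) \<le> real n"
        unfolding d_def by (rule lam_quot_mult_dist_le[OF n])
      moreover have "0 \<le> lam_quot n (cf_value a) s t" unfolding lam_quot_def by simp
      ultimately have "lam_quot n (cf_value a) s t * (real J / 2 * \<epsilon>) \<le> real n"
        by (meson mult_left_mono order_trans)
      then have "lam_quot n (cf_value a) s t \<le> 2 * real n / (real J * \<epsilon>)"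
        using Jp e(1) by (simp add: field_simps)
      also have "\<dots> < z" using J Jp e(1) z by (simp add: field_simps)
      finally show ?thesis .
    qed
    then show ?thesis unfolding lam_at_def s_def t_def .
  qed
  then show ?thesis using that by blast
qed

lemma lam_at_frequently_greater:
  assumes va: "cf_digits a" and n: "n > 0" and lam: "ereal z < lambda_n n (cf_value a)" and z: "z \<ge> 1/2"
    and dig: "\<And>j. j \<ge> J0 \<Longrightarrow> real_of_int (a (Suc j)) \<le> M"
  obtains j u v where "j \<ge> J" "\<bar>real_of_int u\<bar> \<le> coeff_bound n M" "\<bar>real_of_int v\<bar> \<le> coeff_bound n M"
    "u + v * den_ratio a j \<ge> 1" "lam_at n a j u v > z"
proof -
  obtain \<epsilon> where e: "\<epsilon> > 0" "\<And>s t. t > 0 \<Longrightarrow> \<bar>real_of_int s / real_of_int t - cf_value a\<bar> < \<epsilon> \<Longrightarrow>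
      \<exists>j\<ge>max J J0. cf_den a (Suc j) \<le> t \<and> t < cf_den a (Suc (Suc j))"
    using near_cf_value_bracket[OF va] by blast
  obtain s t where st: "t > 0" "\<bar>real_of_int s / real_of_int t - cf_value a\<bar> < \<epsilon>"
      "lam_quot n (cf_value a) s t > z"
    using lambda_n_greaterD[OF lam e(1)] by blast
  obtain j where j: "j \<ge> max J J0" "cf_den a (Suc j) \<le> t" "t < cf_den a (Suc (Suc j))"
    using e(2)[OF st(1,2)] by blast
  have "j \<ge> J0" "lam_quot n (cf_value a) s t \<ge> 1/2" using j(1) st(3) z by simp_all
  then obtain u v where "s = basis_num a j u v" "t = basis_den a j u v" "\<bar>real_of_int u\<bar> \<le> coeff_bound n M"
      "\<bar>real_of_int v\<bar> \<le> coeff_bound n M" "u + v * den_ratio a j \<ge> 1"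
    using lam_quot_large_imp_basis_coeffs[OF va n j(2,3) dig] by blast
  then show ?thesis using that[of j u v] st(3) j(1) unfolding lam_at_def by simp
qed

lemma infinite_large_positions:
  assumes "cf_digits a" "n > 0" "ereal z < lambda_n n (cf_value a)" "z \<ge> 1/2"
    and "\<And>j. j \<ge> J0 \<Longrightarrow> real_of_int (a (Suc j)) \<le> M"
  shows "infinite {j. J \<le> j \<and> (\<exists>u v. \<bar>real_of_int u\<bar> \<le> coeff_bound n M \<and> \<bar>real_of_int v\<bar> \<le> coeff_bound n M \<and>
    u + v * den_ratio a j \<ge> 1 \<and> lam_at n a j u v > z)}"
  unfolding infinite_nat_iff_unbounded_le
proof
  fix K
  obtain j u v where "j \<ge> max K J" "\<bar>real_of_int u\<bar> \<le> coeff_bound n M" "\<bar>real_of_int v\<bar> \<le> coeff_bound n M"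
    "u + v * den_ratio a j \<ge> 1" "lam_at n a j u v > z"
    by (rule lam_at_frequently_greater[OF assms])
  then show "\<exists>j\<ge>K. j \<in> {j. J \<le> j \<and> (\<exists>u v. \<bar>real_of_int u\<bar> \<le> coeff_bound n M \<and>
      \<bar>real_of_int v\<bar> \<le> coeff_bound n M \<and> u + v * den_ratio a j \<ge> 1 \<and> lam_at n a j u v > z)}"
    by auto
qed

lemma lambda_n_ge_1:
  assumes "cf_digits a" "n > 0"
  shows "ereal 1 \<le> lambda_n n (cf_value a)"
proof (rule lambda_n_ge_of_lam_at_ge[OF assms])
  fix J
  have "lam_at n a J 1 0 \<ge> 1"
    using lam_at_1_0_ge[OF assms, of J] cf_tail_ge_1[OF assms(1), of "Suc J"] by simp
  then show "\<exists>j\<ge>J. \<exists>u v. u + v * den_ratio a j \<ge> 1/2 \<and> lam_at n a j u v \<ge> 1"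
    by (intro exI[of _ J] conjI exI[of _ 1] exI[of _ 0]) auto
qed simp

lemma cf_digits_eventually_bounded:
  assumes va: "cf_digits a" and n: "n > 0" and lam: "lambda_n n (cf_value a) = ereal y"
  obtains J where "\<And>j. j \<ge> J \<Longrightarrow> real_of_int (a (Suc j)) \<le> y + 1"
proof -
  have "y \<ge> 1" using lambda_n_ge_1[OF va n] lam by simp
  have lt: "lambda_n n (cf_value a) < ereal (y + 1)" using lam by simp
  have pos: "y + 1 > 0" using \<open>y \<ge> 1\<close> by simp
  obtain J where J: "\<And>j u v. j \<ge> J \<Longrightarrow> u + v * den_ratio a j \<ge> 1/2 \<Longrightarrow> lam_at n a j u v < y + 1"
    using lam_at_eventually_less[OF va n lt pos] by blast
  have "real_of_int (a (Suc j)) \<le> y + 1" if "j \<ge> J" for j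
    using J[OF that, of 1 0] lam_at_1_0_ge[OF va n, of j] cf_tail_bounds[OF va, of "Suc j"] by simp
  then show ?thesis using that by blast
qed

lemma eventual_bounds_of_lambda_n:
  assumes va: "cf_digits a" and n: "n > 0" and lam: "lambda_n n (cf_value a) = ereal y" and \<delta>: "\<delta> > 0"
  obtains T where "\<And>j. j \<ge> T \<Longrightarrow> real_of_int (a (Suc j)) \<le> y + 1"
    "\<And>j u v. j \<ge> T \<Longrightarrow> u + v * den_ratio a j \<ge> 1/2 \<Longrightarrow> lam_at n a j u v < y + \<delta>"
proof -
  obtain J0 where J0: "\<And>j. j \<ge> J0 \<Longrightarrow> real_of_int (a (Suc j)) \<le> y + 1"
    using cf_digits_eventually_bounded[OF va n lam] by blast
  have "lambda_n n (cf_value a) < ereal (y + \<delta>)" "y + \<delta> > 0"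
    using lam \<delta> lambda_n_ge_1[OF va n] by simp_all
  then obtain J1 where "\<And>j u v. j \<ge> J1 \<Longrightarrow> u + v * den_ratio a j \<ge> 1/2 \<Longrightarrow> lam_at n a j u v < y + \<delta>"
    using lam_at_eventually_less[OF va n] by blast
  then show ?thesis using that[of "max J0 J1"] J0 by simp
qed


section \<open>Dependence of the quotient on nearby digits\<close>

text \<open>One step \<open>x \<mapsto> 1 / (c + x)\<close> need not contract, but two steps contract by a factor \<open>1/4\<close>.\<close>

lemma double_reciprocal_contraction:
  fixes c0 c1 x y :: real
  assumes c: "c0 \<ge> 1" "c1 \<ge> 1" and xy: "x \<ge> 0" "y \<ge> 0"
  shows "\<bar>1 / (c0 + 1 / (c1 + x)) - 1 / (c0 + 1 / (c1 + y))\<bar> \<le> \<bar>x - y\<bar> / 4"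
proof -
  have p: "c1 + x > 0" "c1 + y > 0" using c xy by auto
  have q: "c0 * (c1 + x) + 1 \<ge> 2" "c0 * (c1 + y) + 1 \<ge> 2"
    using mult_mono[of 1 c0 1 "c1 + x"] mult_mono[of 1 c0 1 "c1 + y"] c xy by auto
  have "1 / (c0 + 1 / (c1 + x)) - 1 / (c0 + 1 / (c1 + y))
      = (c1 + x) / (c0 * (c1 + x) + 1) - (c1 + y) / (c0 * (c1 + y) + 1)"
    using p by (simp add: field_simps)
  also have "\<dots> = ((c1 + x) * (c0 * (c1 + y) + 1) - (c1 + y) * (c0 * (c1 + x) + 1)) /
      ((c0 * (c1 + x) + 1) * (c0 * (c1 + y) + 1))"
    using q by (simp add: diff_frac_eq)
  also have "(c1 + x) * (c0 * (c1 + y) + 1) - (c1 + y) * (c0 * (c1 + x) + 1) = x - y"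
    by (simp add: algebra_simps)
  finally have "\<bar>1 / (c0 + 1 / (c1 + x)) - 1 / (c0 + 1 / (c1 + y))\<bar>
      = \<bar>x - y\<bar> / ((c0 * (c1 + x) + 1) * (c0 * (c1 + y) + 1))"
    using q by (simp add: abs_divide abs_mult)
  also have "\<dots> \<le> \<bar>x - y\<bar> / 4"
    using q mult_mono[OF q] by (intro divide_left_mono) auto
  finally show ?thesis .
qed

lemma reciprocal_chain_contraction:
  fixes f g c :: "nat \<Rightarrow> real"
  assumes "\<And>i. i < R \<Longrightarrow> f i = 1 / (c i + f (Suc i)) \<and> g i = 1 / (c i + g (Suc i))"
    and "\<And>i. i < R \<Longrightarrow> c i \<ge> 1"
    and "\<And>i. i \<le> R \<Longrightarrow> 0 \<le> f i \<and> f i \<le> 1 \<and> 0 \<le> g i \<and> g i \<le> 1"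
  shows "\<bar>f 0 - g 0\<bar> \<le> (1/4) ^ (R div 2)"
  using assms
proof (induction R arbitrary: f g c rule: less_induct)
  case (less R)
  show ?case
  proof (cases "R < 2")
    case True
    then show ?thesis using less.prems(3)[of 0] by (simp add: abs_le_iff)
  next
    case False
    then obtain R' where RR: "R = Suc (Suc R')" by (metis less_2_cases_iff not0_implies_Suc)
    have "\<bar>(\<lambda>i. f (i + 2)) 0 - (\<lambda>i. g (i + 2)) 0\<bar> \<le> (1/4) ^ (R' div 2)"
    proof (rule less.IH[of R'])
      show "\<And>i. i < R' \<Longrightarrow> f (i + 2) = 1 / (c (i + 2) + f (Suc i + 2)) \<and> g (i + 2) = 1 / (c (i + 2) + g (Suc i + 2))"
        "\<And>i. i < R' \<Longrightarrow> c (i + 2) \<ge> 1"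
        "\<And>i. i \<le> R' \<Longrightarrow> 0 \<le> f (i + 2) \<and> f (i + 2) \<le> 1 \<and> 0 \<le> g (i + 2) \<and> g (i + 2) \<le> 1"
        using less.prems RR by simp_all
    qed (use RR in simp)
    then have IH: "\<bar>f 2 - g 2\<bar> \<le> (1/4) ^ (R' div 2)" by (simp add: numeral_2_eq_2)
    have "\<bar>f 0 - g 0\<bar> \<le> \<bar>f 2 - g 2\<bar> / 4"
    proof -
      have "f 0 = 1 / (c 0 + 1 / (c 1 + f 2))" "g 0 = 1 / (c 0 + 1 / (c 1 + g 2))"
        using less.prems(1)[of 0] less.prems(1)[of 1] RR by (simp_all add: numeral_2_eq_2)
      then show ?thesis
        using double_reciprocal_contraction less.prems(2)[of 0] less.prems(2)[of 1] less.prems(3)[of 2] RR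
        by simp
    qed
    also have "\<dots> \<le> (1/4) ^ (R' div 2) / 4" using IH by simp
    also have "\<dots> = (1/4) ^ (R div 2)" using RR by simp
    finally show ?thesis .
  qed
qed

definition digits_agree :: "(nat \<Rightarrow> int) \<Rightarrow> nat \<Rightarrow> (nat \<Rightarrow> int) \<Rightarrow> nat \<Rightarrow> nat \<Rightarrow> bool" where
  "digits_agree a j b m R \<longleftrightarrow> (\<forall>r<R. a (j + 1 + r) = b (m + 1 + r)) \<and> (\<forall>r<R. a (j - r) = b (m - r)) \<and>
     R \<le> j \<and> R \<le> m"

definition agreement_error :: "nat \<Rightarrow> real" where
  "agreement_error R = (1/4) ^ ((R - 1) div 2)"

lemma agreement_error_le_1: "agreement_error R \<le> 1"
  unfolding agreement_error_def by (simp add: power_le_one)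

lemma eventually_agreement_error_le:
  assumes "\<delta> > 0"
  shows "\<forall>\<^sub>F R in sequentially. agreement_error R \<le> \<delta>"
proof -
  obtain k where k: "(1/4::real) ^ k < \<delta>" using real_arch_pow_inv[OF assms, of "1/4"] by auto
  have "agreement_error R \<le> \<delta>" if "R \<ge> 2 * k + 1" for R
  proof -
    have "agreement_error R \<le> (1/4) ^ k"
      unfolding agreement_error_def using that by (intro power_decreasing) auto
    with k show ?thesis by linarith
  qed
  then show ?thesis unfolding eventually_sequentially by blast
qed

lemma eventually_agreement_error_mult_le:
  assumes "K \<ge> 0" "\<delta> > 0"
  shows "\<forall>\<^sub>F R in sequentially. agreement_error R * K \<le> \<delta>"
  using eventually_agreement_error_le[of "\<delta> / (K + 1)"]
proof (rule eventually_mono)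
  fix R assume "agreement_error R \<le> \<delta> / (K + 1)"
  then have "agreement_error R * K \<le> \<delta> / (K + 1) * K" using assms(1) by (rule mult_right_mono)
  also have "\<dots> \<le> \<delta>" using assms by (simp add: field_simps)
  finally show "agreement_error R * K \<le> \<delta>" .
qed (use assms in simp)

lemma den_ratio_close:
  assumes va: "cf_digits a" and vb: "cf_digits b" and ag: "digits_agree a j b m R"
  shows "\<bar>den_ratio a j - den_ratio b m\<bar> \<le> agreement_error R"
proof -
  have R: "R \<le> j" "R \<le> m" and dg: "\<And>r. r < R \<Longrightarrow> a (j - r) = b (m - r)"
    using ag unfolding digits_agree_def by auto
  have "\<bar>(\<lambda>i. den_ratio a (j - i)) 0 - (\<lambda>i. den_ratio b (m - i)) 0\<bar> \<le> (1/4) ^ (R div 2)"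
  proof (rule reciprocal_chain_contraction[where c = "\<lambda>i. real_of_int (a (j - i))"])
    fix i assume i: "i < R"
    then have "j - i = Suc (j - Suc i)" "m - i = Suc (m - Suc i)" using R by simp_all
    then show "den_ratio a (j - i) = 1 / (real_of_int (a (j - i)) + den_ratio a (j - Suc i)) \<and>
          den_ratio b (m - i) = 1 / (real_of_int (a (j - i)) + den_ratio b (m - Suc i))"
      using den_ratio_Suc[OF va, of "j - Suc i"] den_ratio_Suc[OF vb, of "m - Suc i"] dg[OF i] by simp
    show "real_of_int (a (j - i)) \<ge> 1" using cf_digitsD[OF va, of "j - i"] i R by simp
  qed (use den_ratio_bounds[OF va] den_ratio_bounds[OF vb] in auto)
  moreover have "(1/4::real) ^ (R div 2) \<le> agreement_error R"
    unfolding agreement_error_def by (rule power_decreasing) (auto simp: div_le_mono)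
  ultimately show ?thesis by simp
qed

lemma cf_tail_close:
  assumes va: "cf_digits a" and vb: "cf_digits b" and ag: "digits_agree a j b m R" and R1: "R \<ge> 1"
  shows "\<bar>cf_tail a (Suc j) - cf_tail b (Suc m)\<bar> \<le> agreement_error R"
proof -
  have dg: "\<And>r. r < R \<Longrightarrow> a (j + 1 + r) = b (m + 1 + r)" using ag unfolding digits_agree_def by auto
  have inv: "1 / cf_tail c k = 1 / (c k + 1 / cf_tail c (Suc k))" "0 \<le> 1 / cf_tail c k \<and> 1 / cf_tail c k \<le> 1"
    if "cf_digits c" "k \<ge> 1" for c k
    using cf_tail_rec[OF that(1), of k] cf_tail_ge_1[OF that] by simp_all
  have "\<bar>(\<lambda>i. 1 / cf_tail a (j + 2 + i)) 0 - (\<lambda>i. 1 / cf_tail b (m + 2 + i)) 0\<bar> \<le> (1/4) ^ ((R - 1) div 2)"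
  proof (rule reciprocal_chain_contraction[where c = "\<lambda>i. real_of_int (a (j + 2 + i))"])
    fix i assume "i < R - 1"
    then have "a (j + 2 + i) = b (m + 2 + i)" using dg[of "Suc i"] by simp
    then show "1 / cf_tail a (j + 2 + i) = 1 / (real_of_int (a (j + 2 + i)) + 1 / cf_tail a (j + 2 + Suc i)) \<and>
        1 / cf_tail b (m + 2 + i) = 1 / (real_of_int (a (j + 2 + i)) + 1 / cf_tail b (m + 2 + Suc i))"
      using inv(1)[OF va, of "j + 2 + i"] inv(1)[OF vb, of "m + 2 + i"] by simp
    show "real_of_int (a (j + 2 + i)) \<ge> 1" using cf_digitsD[OF va, of "j + 2 + i"] by simp
  qed (use inv(2)[OF va] inv(2)[OF vb] in auto)
  moreover have "a (Suc j) = b (Suc m)" using dg[of 0] R1 by simp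
  ultimately show ?thesis
    using cf_tail_rec[OF va, of "Suc j"] cf_tail_rec[OF vb, of "Suc m"] unfolding agreement_error_def
    by (simp add: numeral_2_eq_2)
qed

definition den_residues :: "nat \<Rightarrow> (nat \<Rightarrow> int) \<Rightarrow> nat \<Rightarrow> int \<times> int" where
  "den_residues n a j = (cf_den a (Suc j) mod int n, cf_den a j mod int n)"

lemma gcd_basis_den_residues:
  assumes "den_residues n a j = den_residues n b m"
  shows "gcd (basis_den a j u v) (int n) = gcd (basis_den b m u v) (int n)"
proof -
  have "cf_den a (Suc j) mod int n = cf_den b (Suc m) mod int n" "cf_den a j mod int n = cf_den b m mod int n"
    using assms unfolding den_residues_def by auto
  then have "basis_den a j u v mod int n = basis_den b m u v mod int n"
    unfolding basis_den_def by (metis mod_add_cong mod_mult_right_eq)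
  then show ?thesis by (metis gcd_red_int)
qed

lemma quotient_perturb:
  fixes N N' X X' Y :: real
  assumes "N \<ge> 1" "X > 0" "N / X \<le> Y" "\<bar>X - X'\<bar> \<le> 1 / (2 * Y)"
  shows "\<bar>N' / X' - N / X\<bar> \<le> 2 * Y * \<bar>N' - N\<bar> + 2 * Y^2 * \<bar>X - X'\<bar>"
proof -
  have Y: "Y > 0" using assms(1-3) by (smt (verit) divide_pos_pos)
  have "1 / Y \<le> X" using assms(1-3) Y by (simp add: field_simps)
  moreover have "1 / Y - 1 / (2 * Y) = 1 / (2 * Y)" using Y by (simp add: field_simps)
  ultimately have X': "1 / (2 * Y) \<le> X'" using assms(4) by linarith
  then have X'p: "X' > 0" using Y by (smt (verit) divide_pos_pos)
  have inv: "1 / X' \<le> 2 * Y" using X' X'p Y by (simp add: field_simps)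
  have t1: "\<bar>(N' - N) * (1 / X')\<bar> \<le> \<bar>N' - N\<bar> * (2 * Y)"
    unfolding abs_mult using inv X'p by (intro mult_left_mono) auto
  have "\<bar>N / X\<bar> = N / X" using assms(1,2) by simp
  then have t2: "\<bar>(N / X) * ((X - X') * (1 / X'))\<bar> \<le> Y * (\<bar>X - X'\<bar> * (2 * Y))"
    unfolding abs_mult using assms(3) inv X'p Y by (intro mult_mono mult_left_mono) auto
  have "N' / X' - N / X = (N' - N) * (1 / X') + (N / X) * ((X - X') * (1 / X'))"
    using assms(2) X'p by (simp add: field_simps)
  then have "\<bar>N' / X' - N / X\<bar> \<le> \<bar>N' - N\<bar> * (2 * Y) + Y * (\<bar>X - X'\<bar> * (2 * Y))"
    using t1 t2 abs_triangle_ineq[of "(N' - N) * (1 / X')" "(N / X) * ((X - X') * (1 / X'))"] by linarith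
  then show ?thesis by (simp add: algebra_simps power2_eq_square)
qed

lemma lam_expr_perturb:
  fixes \<alpha> \<beta> \<alpha>' \<beta>' u v g n M B Y d :: real
  assumes ha: "1 \<le> \<alpha>" "\<alpha> \<le> M + 1" and ha': "1 \<le> \<alpha>'"
    and hb: "0 \<le> \<beta>" "\<beta> \<le> 1" and hb': "0 \<le> \<beta>'" "\<beta>' \<le> 1"
    and da: "\<bar>\<alpha> - \<alpha>'\<bar> \<le> d" and db: "\<bar>\<beta> - \<beta>'\<bar> \<le> d" and d1: "d \<le> 1"
    and hu: "\<bar>u\<bar> \<le> B" and hv: "\<bar>v\<bar> \<le> B" and hg: "1 \<le> g" "g \<le> n" and M0: "M \<ge> 0"
    and X: "\<bar>(u + v * \<beta>) * (u - v * \<alpha>)\<bar> > 0"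
    and Y: "g * (\<alpha> + \<beta>) / \<bar>(u + v * \<beta>) * (u - v * \<alpha>)\<bar> \<le> Y"
    and dK: "d * (B^2 * (M + 5)) \<le> 1 / (2 * Y)"
  shows "\<bar>g * (\<alpha>' + \<beta>') / \<bar>(u + v * \<beta>') * (u - v * \<alpha>')\<bar> - g * (\<alpha> + \<beta>) / \<bar>(u + v * \<beta>) * (u - v * \<alpha>)\<bar>\<bar>
           \<le> d * (4 * n * Y + 2 * (B^2 * (M + 5)) * Y^2)"
proof -
  define w z w' z' where "w = u + v * \<beta>" "z = u - v * \<alpha>" "w' = u + v * \<beta>'" "z' = u - v * \<alpha>'"
  define K where "K = B^2 * (M + 5)"
  have d0: "d \<ge> 0" and B0: "B \<ge> 0" using db hu by linarith+
  have e: "\<bar>w - w'\<bar> = \<bar>v\<bar> * \<bar>\<beta> - \<beta>'\<bar>" "\<bar>z - z'\<bar> = \<bar>v\<bar> * \<bar>\<alpha> - \<alpha>'\<bar>"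
    unfolding w_z_w'_z'_def by (simp_all add: abs_mult[symmetric] algebra_simps)
  have dw: "\<bar>w - w'\<bar> \<le> B * d" unfolding e(1) using hv db by (intro mult_mono) auto
  have dz: "\<bar>z - z'\<bar> \<le> B * d" unfolding e(2) using hv da by (intro mult_mono) auto
  have "\<bar>v * \<beta>\<bar> \<le> B * 1" unfolding abs_mult using hv hb by (intro mult_mono) auto
  then have wb: "\<bar>w\<bar> \<le> 2 * B" unfolding w_z_w'_z'_def using hu by linarith
  have zb: "\<bar>z'\<bar> \<le> B * (M + 3)"
  proof -
    have "\<alpha>' \<le> M + 2" using da ha d1 by linarith
    then have "\<bar>v * \<alpha>'\<bar> \<le> B * (M + 2)" unfolding abs_mult using hv ha' by (intro mult_mono) auto
    then show ?thesis unfolding w_z_w'_z'_def using hu by (simp add: algebra_simps)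
  qed
  have "w * z - w' * z' = w * (z - z') + z' * (w - w')" by (simp add: algebra_simps)
  then have "\<bar>w * z - w' * z'\<bar> \<le> \<bar>w\<bar> * \<bar>z - z'\<bar> + \<bar>z'\<bar> * \<bar>w - w'\<bar>"
    by (simp add: abs_mult[symmetric] abs_triangle_ineq)
  also have "\<dots> \<le> (2 * B) * (B * d) + (B * (M + 3)) * (B * d)"
    using wb zb dw dz B0 d0 M0 by (intro add_mono mult_mono) auto
  also have "\<dots> = K * d" unfolding K_def by (simp add: algebra_simps power2_eq_square)
  finally have dX: "\<bar>\<bar>w * z\<bar> - \<bar>w' * z'\<bar>\<bar> \<le> K * d" using abs_triangle_ineq3 order_trans by blast
  have "g * (\<alpha>' + \<beta>') - g * (\<alpha> + \<beta>) = g * ((\<alpha>' - \<alpha>) + (\<beta>' - \<beta>))" by (simp add: algebra_simps)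
  then have "\<bar>g * (\<alpha>' + \<beta>') - g * (\<alpha> + \<beta>)\<bar> = g * \<bar>(\<alpha>' - \<alpha>) + (\<beta>' - \<beta>)\<bar>"
    using hg by (simp add: abs_mult)
  also have "\<dots> \<le> n * (2 * d)" using da db hg d0 by (intro mult_mono) (auto simp: abs_minus_commute)
  finally have dN: "\<bar>g * (\<alpha>' + \<beta>') - g * (\<alpha> + \<beta>)\<bar> \<le> 2 * n * d" by simp
  have N1: "1 * 1 \<le> g * (\<alpha> + \<beta>)" using ha hb hg by (intro mult_mono) auto
  then have "0 \<le> g * (\<alpha> + \<beta>) / \<bar>(u + v * \<beta>) * (u - v * \<alpha>)\<bar>" by simp
  with Y have Y0: "0 \<le> Y" by linarith
  from N1 have "\<bar>g * (\<alpha>' + \<beta>') / \<bar>w' * z'\<bar> - g * (\<alpha> + \<beta>) / \<bar>w * z\<bar>\<bar>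
      \<le> 2 * Y * \<bar>g * (\<alpha>' + \<beta>') - g * (\<alpha> + \<beta>)\<bar> + 2 * Y^2 * \<bar>\<bar>w * z\<bar> - \<bar>w' * z'\<bar>\<bar>"
    using X Y dX dK unfolding w_z_w'_z'_def K_def by (intro quotient_perturb) (auto simp: mult.commute)
  also have "\<dots> \<le> 2 * Y * (2 * n * d) + 2 * Y^2 * (K * d)"
    using dN dX X Y0 by (intro add_mono mult_left_mono) (auto simp: w_z_w'_z'_def)
  finally show ?thesis unfolding w_z_w'_z'_def K_def by (simp add: algebra_simps power2_eq_square)
qed

lemma basis_coeff_tail_nonzero:
  assumes va: "cf_digits a" and w: "real_of_int u + real_of_int v * den_ratio a j > 0"
  shows "real_of_int u - real_of_int v * cf_tail a (Suc j) \<noteq> 0"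
proof
  assume z: "real_of_int u - real_of_int v * cf_tail a (Suc j) = 0"
  show False
  proof (cases "v = 0")
    case True
    then show False using w z by simp
  next
    case False
    then have "cf_tail a (Suc j) = real_of_int u / real_of_int v" using z by (simp add: field_simps)
    then show False using cf_tail_irrational[OF va] by (metis Rats_divide Rats_of_int)
  qed
qed

lemma lam_at_transfer:
  assumes va: "cf_digits a" and vb: "cf_digits b" and n: "n > 0" and M0: "M \<ge> 0"
    and dig: "real_of_int (a (Suc j)) \<le> M"
    and ag: "digits_agree a j b m R" and R1: "R \<ge> 1" and res: "den_residues n a j = den_residues n b m"
    and dK: "agreement_error R * (B^2 * (M + 5)) \<le> 1 / (2 * Y)"
    and hu: "\<bar>real_of_int u\<bar> \<le> B" and hv: "\<bar>real_of_int v\<bar> \<le> B"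
    and wa: "u + v * den_ratio a j \<ge> 1/2" and wb: "u + v * den_ratio b m \<ge> 1/2"
    and Y: "lam_at n a j u v \<le> Y"
  shows "\<bar>lam_at n b m u v - lam_at n a j u v\<bar> \<le> agreement_error R * (4 * n * Y + 2 * (B^2 * (M + 5)) * Y^2)"
proof -
  have fa: "lam_at n a j u v = real_of_int (gcd (basis_den a j u v) (int n)) * (cf_tail a (Suc j) + den_ratio a j) /
            \<bar>(u + v * den_ratio a j) * (u - v * cf_tail a (Suc j))\<bar>"
    using lam_at_formula[OF va] wa by simp
  have fb: "lam_at n b m u v = real_of_int (gcd (basis_den a j u v) (int n)) * (cf_tail b (Suc m) + den_ratio b m) /
            \<bar>(u + v * den_ratio b m) * (u - v * cf_tail b (Suc m))\<bar>"
    using lam_at_formula[OF vb] wb gcd_basis_den_residues[OF res, of u v] by simp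
  have "\<bar>(u + v * den_ratio a j) * (u - v * cf_tail a (Suc j))\<bar> > 0"
    using basis_coeff_tail_nonzero[OF va, of u v j] wa by simp
  then show ?thesis
    unfolding fa fb
    by (intro lam_expr_perturb) (use cf_tail_ge_1[OF va, of "Suc j"] cf_tail_bounds[OF va, of "Suc j"] dig
       cf_tail_ge_1[OF vb, of "Suc m"] den_ratio_bounds[OF va, of j] den_ratio_bounds[OF vb, of m]
       cf_tail_close[OF va vb ag R1] den_ratio_close[OF va vb ag] agreement_error_le_1[of R]
       hu hv gcd_int_nat_bounds[OF n] M0 Y fa dK in auto)
qed

lemma admissible_transfer:
  assumes "\<bar>den_ratio a j - den_ratio b m\<bar> \<le> d" "\<bar>real_of_int v\<bar> \<le> B" "d * B \<le> 1/2" "d \<ge> 0"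
    and "u + v * den_ratio b m \<ge> 1"
  shows "u + v * den_ratio a j \<ge> 1/2"
proof -
  have "\<bar>v * den_ratio a j - v * den_ratio b m\<bar> = \<bar>real_of_int v\<bar> * \<bar>den_ratio a j - den_ratio b m\<bar>"
    by (simp add: abs_mult[symmetric] algebra_simps)
  also have "\<dots> \<le> B * d" using assms(1,2,4) by (intro mult_mono) auto
  finally show ?thesis using assms(3,5) by (simp add: mult.commute abs_le_iff)
qed

text \<open>The window lengths \<open>R\<close> for which lam_at_transfer and admissible_transfer give tolerance \<open>\<epsilon>\<close>,
  for coefficients bounded by \<open>coeff_bound n M\<close> and quotients at most \<open>Y\<close>.\<close>

definition window_ok :: "nat \<Rightarrow> real \<Rightarrow> real \<Rightarrow> real \<Rightarrow> nat \<Rightarrow> bool" where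
  "window_ok n M Y \<epsilon> R \<longleftrightarrow> 1 \<le> R \<and>
     agreement_error R * coeff_bound n M \<le> 1/2 \<and>
     agreement_error R * (coeff_bound n M ^ 2 * (M + 5)) \<le> 1 / (2 * Y) \<and>
     agreement_error R * (4 * n * Y + 2 * (coeff_bound n M ^ 2 * (M + 5)) * Y^2) \<le> \<epsilon>"

lemma eventually_window_ok:
  assumes "Y > 0" "\<epsilon> > 0" "M \<ge> 0"
  shows "\<forall>\<^sub>F R in sequentially. window_ok n M Y \<epsilon> R"
  unfolding window_ok_def using assms coeff_bound_nonneg[OF assms(3), of n]
  by (intro eventually_conj eventually_agreement_error_mult_le eventually_ge_at_top) auto

lemma window_ok_exists:
  assumes "Y > 0" "\<epsilon> > 0" "M \<ge> 0"
  obtains R where "window_ok n M Y \<epsilon> R"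
  using eventually_window_ok[OF assms, of n] that by (auto simp: eventually_sequentially)

lemma lam_at_transfer_window:
  assumes "window_ok n M Y \<epsilon> R" "cf_digits a" "cf_digits b" "n > 0" "M \<ge> 0"
    "real_of_int (a (Suc j)) \<le> M" "digits_agree a j b m R" "den_residues n a j = den_residues n b m"
    "\<bar>real_of_int u\<bar> \<le> coeff_bound n M" "\<bar>real_of_int v\<bar> \<le> coeff_bound n M"
    "u + v * den_ratio a j \<ge> 1/2" "u + v * den_ratio b m \<ge> 1/2" "lam_at n a j u v \<le> Y"
  shows "\<bar>lam_at n b m u v - lam_at n a j u v\<bar> \<le> \<epsilon>"
  using lam_at_transfer[OF assms(2-7) _ assms(8) _ assms(9-13)] assms(1) unfolding window_ok_def by auto

lemma admissible_transfer_window: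
  assumes "window_ok n M Y \<epsilon> R" "cf_digits a" "cf_digits b" "digits_agree a j b m R"
    "\<bar>real_of_int v\<bar> \<le> coeff_bound n M"
  shows "u + v * den_ratio a j \<ge> 1 \<Longrightarrow> u + v * den_ratio b m \<ge> 1/2"
    and "u + v * den_ratio b m \<ge> 1 \<Longrightarrow> u + v * den_ratio a j \<ge> 1/2"
  using admissible_transfer[of a j b m "agreement_error R" v "coeff_bound n M" u]
    admissible_transfer[of b m a j "agreement_error R" v "coeff_bound n M" u]
    den_ratio_close[OF assms(2-4)] assms(1,5) unfolding window_ok_def agreement_error_def
  by (auto simp: abs_minus_commute)

lemma lambda_n_le_of_local_copies:
  assumes vb: "cf_digits b" and n: "n > 0" and y: "1 \<le> y" "y \<le> Y" and M0: "M \<ge> 0"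
    and win: "window_ok n M Y \<epsilon> R"
    and src: "\<And>m. m \<ge> K \<Longrightarrow> \<exists>c p. cf_digits c \<and> digits_agree c p b m R \<and>
        den_residues n c p = den_residues n b m \<and> real_of_int (c (Suc p)) \<le> M \<and>
        (\<forall>u v. u + v * den_ratio c p \<ge> 1/2 \<longrightarrow> lam_at n c p u v \<le> y)"
  shows "lambda_n n (cf_value b) \<le> ereal (y + \<epsilon>)"
proof (rule lambda_n_le_of_lam_at_le[OF vb n, of "y + \<epsilon>" K M])
  have "0 \<le> agreement_error R * (4 * real n * Y + 2 * (coeff_bound n M ^ 2 * (M + 5)) * Y^2)"
    using y M0 unfolding agreement_error_def by (intro mult_nonneg_nonneg add_nonneg_nonneg) auto
  then show "1 \<le> y + \<epsilon>" using y win unfolding window_ok_def by linarith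
next
  fix j assume "j \<ge> K"
  then obtain c p where "digits_agree c p b j R" "real_of_int (c (Suc p)) \<le> M"
    using src by blast
  moreover have "0 < R" using win unfolding window_ok_def by simp
  ultimately have "c (p + 1 + 0) = b (j + 1 + 0)" "real_of_int (c (Suc p)) \<le> M"
    unfolding digits_agree_def by blast+
  then show "real_of_int (b (Suc j)) \<le> M" by simp
next
  fix j u v assume j: "j \<ge> K" and hu: "\<bar>real_of_int u\<bar> \<le> coeff_bound n M"
    and hv: "\<bar>real_of_int v\<bar> \<le> coeff_bound n M" and w: "u + v * den_ratio b j \<ge> 1"
  obtain c p where c: "cf_digits c" "digits_agree c p b j R" "den_residues n c p = den_residues n b j"
      "real_of_int (c (Suc p)) \<le> M" "\<forall>u v. u + v * den_ratio c p \<ge> 1/2 \<longrightarrow> lam_at n c p u v \<le> y"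
    using src[OF j] by blast
  have wc: "u + v * den_ratio c p \<ge> 1/2" using admissible_transfer_window(2)[OF win c(1) vb c(2) hv w] .
  then have "lam_at n c p u v \<le> y" using c(5) by blast
  moreover have "\<bar>lam_at n b j u v - lam_at n c p u v\<bar> \<le> \<epsilon>"
    using lam_at_transfer_window[OF win c(1) vb n M0 c(4) c(2) c(3) hu hv wc] w y(2) \<open>lam_at n c p u v \<le> y\<close>
    by simp
  ultimately show "lam_at n b j u v \<le> y + \<epsilon>" by linarith
qed

lemma lambda_n_ge_of_local_copies:
  assumes vb: "cf_digits b" and n: "n > 0" and y: "y - \<epsilon> > 0" and M0: "M \<ge> 0"
    and win: "window_ok n M Y \<epsilon> R"
    and src: "\<And>K. \<exists>m\<ge>K. \<exists>c p u v. cf_digits c \<and> digits_agree c p b m R \<and>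
        den_residues n c p = den_residues n b m \<and> real_of_int (c (Suc p)) \<le> M \<and>
        \<bar>real_of_int u\<bar> \<le> coeff_bound n M \<and> \<bar>real_of_int v\<bar> \<le> coeff_bound n M \<and>
        u + v * den_ratio c p \<ge> 1 \<and> y \<le> lam_at n c p u v \<and> lam_at n c p u v \<le> Y"
  shows "ereal (y - \<epsilon>) \<le> lambda_n n (cf_value b)"
proof (rule lambda_n_ge_of_lam_at_ge[OF vb n y])
  fix J
  obtain m c p u v where m: "m \<ge> J" and c: "cf_digits c" "digits_agree c p b m R"
      "den_residues n c p = den_residues n b m" "real_of_int (c (Suc p)) \<le> M"
      "\<bar>real_of_int u\<bar> \<le> coeff_bound n M" "\<bar>real_of_int v\<bar> \<le> coeff_bound n M"
      "u + v * den_ratio c p \<ge> 1" "y \<le> lam_at n c p u v" "lam_at n c p u v \<le> Y"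
    using src[of J] by blast
  have wb: "u + v * den_ratio b m \<ge> 1/2" using admissible_transfer_window(1)[OF win c(1) vb c(2) c(6) c(7)] .
  have "\<bar>lam_at n b m u v - lam_at n c p u v\<bar> \<le> \<epsilon>"
    using lam_at_transfer_window[OF win c(1) vb n M0 c(4) c(2) c(3) c(5) c(6) _ wb c(9)] c(7) by simp
  then have "lam_at n b m u v \<ge> y - \<epsilon>" using c(8) by linarith
  then show "\<exists>j\<ge>J. \<exists>u v. u + v * den_ratio b j \<ge> 1/2 \<and> lam_at n b j u v \<ge> y - \<epsilon>"
    using m wb by blast
qed

section \<open>Eventually periodic expansions\<close>

lemma cf_den_strict_mono:
  assumes "cf_digits a" "k \<ge> 1" "P \<ge> 1"
  shows "cf_den a (Suc k) < cf_den a (Suc (k + P))"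
  using cf_den_strict[OF assms(1,2)] cf_den_mono[OF assms(1), of "Suc (Suc k)" "Suc (k + P)"] assms(3)
  by simp

lemma cf_value_mobius_eq:
  assumes "cf_digits a"
  shows "cf_value a * (real_of_int (cf_den a (Suc k)) * cf_tail a (Suc k) + real_of_int (cf_den a k))
       = real_of_int (cf_num a (Suc k)) * cf_tail a (Suc k) + real_of_int (cf_num a k)"
  using cf_value_mobius[OF assms, of k] cf_mobius_denom_pos[OF assms, of "cf_tail a (Suc k)" k]
    cf_tail_ge_1[OF assms, of "Suc k"]
  unfolding cf_mobius_def by simp

text \<open>Eliminating the common complete quotient \<open>x = \<alpha>\<^sub>i\<^sub>+\<^sub>1 = \<alpha>\<^sub>i\<^sub>+\<^sub>P\<^sub>+\<^sub>1\<close> from the two Moebius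
  representations of the value gives a quadratic equation; its leading coefficient
  \<open>q\<^sub>i\<^sub>+\<^sub>P\<^sub>-\<^sub>1q\<^sub>i - q\<^sub>i\<^sub>-\<^sub>1q\<^sub>i\<^sub>+\<^sub>P\<close> vanishes only if \<open>q\<^sub>i = q\<^sub>i\<^sub>+\<^sub>P\<close> (by coprimality), which is impossible.\<close>

lemma quadratic_irrational_if_periodic:
  assumes vb: "cf_digits b" and P: "P \<ge> 1" and i: "i \<ge> 1" and per: "\<And>k. k > i \<Longrightarrow> b (k + P) = b k"
  shows "quadratic_irrational (cf_value b)"
proof -
  define \<eta> where "\<eta> = cf_value b"
  have "cf_shift b (Suc i) k = cf_shift b (Suc (i + P)) k" for k
    using per[of "k + Suc i"] by (simp add: cf_shift_def algebra_simps)
  then have "cf_shift b (Suc i) = cf_shift b (Suc (i + P))" by (rule ext)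
  then have x2: "cf_tail b (Suc (i + P)) = cf_tail b (Suc i)" unfolding cf_tail_def by simp
  define x where "x = cf_tail b (Suc i)"
  define A1 B1 C1 D1 where "A1 = cf_num b (Suc i)" "B1 = cf_num b i" "C1 = cf_den b (Suc i)" "D1 = cf_den b i"
  define A2 B2 C2 D2 where "A2 = cf_num b (Suc (i + P))" "B2 = cf_num b (i + P)"
    "C2 = cf_den b (Suc (i + P))" "D2 = cf_den b (i + P)"
  have f1: "x * (real_of_int C1 * \<eta> - real_of_int A1) = real_of_int B1 - real_of_int D1 * \<eta>"
    using cf_value_mobius_eq[OF vb, of i] unfolding \<eta>_def x_def A1_B1_C1_D1_def by (simp add: algebra_simps)
  have f2: "x * (real_of_int C2 * \<eta> - real_of_int A2) = real_of_int B2 - real_of_int D2 * \<eta>"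
    using cf_value_mobius_eq[OF vb, of "i + P"] x2 unfolding \<eta>_def x_def A2_B2_C2_D2_def
    by (simp add: algebra_simps)
  have "(real_of_int B1 - real_of_int D1 * \<eta>) * (real_of_int C2 * \<eta> - real_of_int A2) =
        (real_of_int B2 - real_of_int D2 * \<eta>) * (real_of_int C1 * \<eta> - real_of_int A1)"
    unfolding f1[symmetric] f2[symmetric] by (simp add: algebra_simps)
  then have poly: "of_int (D2 * C1 - D1 * C2) * \<eta>^2 + of_int (B1 * C2 + D1 * A2 - B2 * C1 - D2 * A1) * \<eta>
      + of_int (B2 * A1 - B1 * A2) = 0"
    by (simp add: algebra_simps power2_eq_square)
  have "D2 * C1 \<noteq> D1 * C2"
  proof
    assume eq: "D2 * C1 = D1 * C2"
    have "coprime C1 D1" "coprime C2 D2" unfolding A1_B1_C1_D1_def A2_B2_C2_D2_def by (simp_all add: coprime_cf_den)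
    moreover have "C1 dvd D1 * C2" "C2 dvd D2 * C1" using eq by (simp_all add: dvd_def) (metis mult.commute)+
    ultimately have "C1 dvd C2" "C2 dvd C1" by (simp_all add: coprime_dvd_mult_right_iff)
    moreover have "0 < C1" "C1 < C2"
      using cf_den_Suc_pos[OF vb, of i] cf_den_strict_mono[OF vb i P] unfolding A1_B1_C1_D1_def A2_B2_C2_D2_def
      by simp_all
    ultimately show False using zdvd_antisym_nonneg[of C1 C2] by simp
  qed
  then have "D2 * C1 - D1 * C2 \<noteq> 0" by simp
  then show ?thesis
    unfolding quadratic_irrational_def using cf_value_irrational[OF vb] poly unfolding \<eta>_def by blast
qed


section \<open>Gluing digit sequences\<close>

lemma cf_den_cong:
  "(\<And>i. i \<le> k \<Longrightarrow> a i = b i) \<Longrightarrow> cf_den a (Suc k) = cf_den b (Suc k) \<and> cf_den a k = cf_den b k"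
  by (induction k) simp_all

lemma den_residues_cong: "(\<And>i. i \<le> k \<Longrightarrow> a i = b i) \<Longrightarrow> den_residues n a k = den_residues n b k"
  unfolding den_residues_def using cf_den_cong by metis

lemma den_residues_Suc_cong:
  assumes "den_residues n a p = den_residues n b q" "a (Suc p) = b (Suc q)"
  shows "den_residues n a (Suc p) = den_residues n b (Suc q)"
proof -
  have "cf_den a (Suc p) mod int n = cf_den b (Suc q) mod int n" "cf_den a p mod int n = cf_den b q mod int n"
    using assms(1) unfolding den_residues_def by simp_all
  then have "(a (Suc p) * cf_den a (Suc p) + cf_den a p) mod int n = (b (Suc q) * cf_den b (Suc q) + cf_den b q) mod int n"
    using assms(2) by (metis mod_add_cong mod_mult_right_eq)
  with assms(1) show ?thesis unfolding den_residues_def by simp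
qed

text \<open>\<open>glue A In Out\<close> concatenates the digits of \<open>A 0\<close> at positions \<open>\<le> Out 0\<close> with, for
  \<open>r \<ge> 1\<close>, the digits of \<open>A r\<close> at positions \<open>In r < k \<le> Out r\<close>; the \<open>r\<close>-th block ends at position
  \<open>glue_end In Out r\<close> of the result, and position \<open>k\<close> of the result is position
  \<open>glue_pos In Out k\<close> of \<open>A (glue_seg In Out k)\<close>.\<close>

fun glue_end :: "(nat \<Rightarrow> nat) \<Rightarrow> (nat \<Rightarrow> nat) \<Rightarrow> nat \<Rightarrow> nat" where
  "glue_end In Out 0 = Out 0"
| "glue_end In Out (Suc r) = glue_end In Out r + (Out (Suc r) - In (Suc r))"

definition glue_seg :: "(nat \<Rightarrow> nat) \<Rightarrow> (nat \<Rightarrow> nat) \<Rightarrow> nat \<Rightarrow> nat" where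
  "glue_seg In Out k = (LEAST r. k \<le> glue_end In Out r)"

definition glue_pos :: "(nat \<Rightarrow> nat) \<Rightarrow> (nat \<Rightarrow> nat) \<Rightarrow> nat \<Rightarrow> nat" where
  "glue_pos In Out k =
     (if glue_seg In Out k = 0 then k else k - glue_end In Out (glue_seg In Out k - 1) + In (glue_seg In Out k))"

definition glue :: "(nat \<Rightarrow> nat \<Rightarrow> int) \<Rightarrow> (nat \<Rightarrow> nat) \<Rightarrow> (nat \<Rightarrow> nat) \<Rightarrow> nat \<Rightarrow> int" where
  "glue A In Out k = A (glue_seg In Out k) (glue_pos In Out k)"

locale gluing =
  fixes In Out :: "nat \<Rightarrow> nat"
  assumes block_nonempty: "\<And>r. In (Suc r) < Out (Suc r)"
begin

abbreviation "E \<equiv> glue_end In Out"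

lemma E_Suc_gt: "E r < E (Suc r)"
  using block_nonempty[of r] by simp

lemma E_mono: "r \<le> r' \<Longrightarrow> E r \<le> E r'"
  by (induction r' rule: dec_induct) (use E_Suc_gt le_less_trans less_imp_le in blast)+

lemma E_ge: "E r \<ge> r"
proof (induction r)
  case (Suc r)
  then show ?case using E_Suc_gt[of r] by linarith
qed simp

lemma glue_seg_eqI:
  assumes "r = 0 \<or> E (r - 1) < k" "k \<le> E r"
  shows "glue_seg In Out k = r"
  unfolding glue_seg_def
proof (rule Least_equality)
  fix y assume y: "k \<le> E y"
  show "r \<le> y"
  proof (rule ccontr)
    assume "\<not> r \<le> y"
    then have "E y \<le> E (r - 1)" "r \<noteq> 0" using E_mono by auto
    then show False using y assms(1) by simp
  qed
qed fact

lemma glue_first_block: "k \<le> E 0 \<Longrightarrow> glue_seg In Out k = 0 \<and> glue_pos In Out k = k"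
  using glue_seg_eqI[of 0 k] by (simp add: glue_pos_def)

lemma glue_later_block:
  "E r < k \<Longrightarrow> k \<le> E (Suc r) \<Longrightarrow> glue_seg In Out k = Suc r \<and> glue_pos In Out k = k - E r + In (Suc r)"
  using glue_seg_eqI[of "Suc r" k] by (simp add: glue_pos_def)

lemma glue_block_cases:
  obtains "k \<le> E 0" | r where "E r < k" "k \<le> E (Suc r)"
proof (cases "k \<le> E 0")
  case False
  define r where "r = glue_seg In Out k"
  have kr: "k \<le> E r" unfolding r_def glue_seg_def using E_ge[of k] by (rule LeastI)
  have r0: "r \<noteq> 0" using kr False by (cases r) auto
  have "\<not> k \<le> E (r - 1)"
  proof
    assume "k \<le> E (r - 1)"
    then have "r \<le> r - 1" unfolding r_def glue_seg_def by (rule Least_le)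
    then show False using r0 by simp
  qed
  then show ?thesis using that(2)[of "r - 1"] kr r0 by simp
qed

lemma glue_at_block_end: "glue_seg In Out (E r) = r \<and> glue_pos In Out (E r) = Out r"
proof (cases r)
  case 0 then show ?thesis using glue_first_block[of "E 0"] by simp
next
  case (Suc r')
  then show ?thesis using glue_later_block[OF E_Suc_gt[of r']] block_nonempty[of r'] by simp
qed

lemma glue_window_forward:
  fixes A :: "nat \<Rightarrow> nat \<Rightarrow> int"
  assumes mf: "\<And>e. e < R \<Longrightarrow> A (Suc r) (Out (Suc r) + 1 + e) = A (Suc (Suc r)) (In (Suc (Suc r)) + 1 + e)"
    and k: "E r < k" "k \<le> E (Suc r)" and R: "R \<le> Out (Suc (Suc r)) - In (Suc (Suc r))" and e: "e < R"
  shows "A (Suc r) (glue_pos In Out k + 1 + e) = glue A In Out (k + 1 + e)"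
proof -
  have pk: "glue_pos In Out k = k - E r + In (Suc r)" using glue_later_block[OF k] by simp
  show ?thesis
  proof (cases "k + 1 + e \<le> E (Suc r)")
    case True
    then have "glue A In Out (k + 1 + e) = A (Suc r) (k + 1 + e - E r + In (Suc r))"
      using glue_later_block[of r "k + 1 + e"] k unfolding glue_def by simp
    also have "k + 1 + e - E r + In (Suc r) = glue_pos In Out k + 1 + e" unfolding pk using k(1) by arith
    finally show ?thesis by simp
  next
    case False
    define e2 where "e2 = k + e - E (Suc r)"
    have "k + 1 + e \<le> E (Suc (Suc r))" using R e k False block_nonempty[of "Suc r"] by simp
    then have "glue A In Out (k + 1 + e) = A (Suc (Suc r)) (k + 1 + e - E (Suc r) + In (Suc (Suc r)))"
      using glue_later_block[of "Suc r" "k + 1 + e"] False unfolding glue_def by simp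
    also have "k + 1 + e - E (Suc r) + In (Suc (Suc r)) = In (Suc (Suc r)) + 1 + e2"
      unfolding e2_def using False by arith
    also have "A (Suc (Suc r)) \<dots> = A (Suc r) (Out (Suc r) + 1 + e2)"
      using mf[of e2] k e unfolding e2_def by simp
    also have "Out (Suc r) + 1 + e2 = glue_pos In Out k + 1 + e"
      unfolding pk e2_def using k False block_nonempty[of r] by simp
    finally show ?thesis by simp
  qed
qed

lemma glue_window_backward:
  fixes A :: "nat \<Rightarrow> nat \<Rightarrow> int"
  assumes mb: "\<And>e. e < R \<Longrightarrow> A r (Out r - e) = A (Suc r) (In (Suc r) - e)"
    and k: "E r < k" "k \<le> E (Suc r)"
    and R: "r = 0 \<or> R \<le> Out r - In r" "R \<le> In (Suc r)" "R \<le> k" and e: "e < R"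
  shows "A (Suc r) (glue_pos In Out k - e) = glue A In Out (k - e)"
proof -
  have pk: "glue_pos In Out k = k - E r + In (Suc r)" using glue_later_block[OF k] by simp
  show ?thesis
  proof (cases "E r < k - e")
    case True
    then have "glue A In Out (k - e) = A (Suc r) (k - e - E r + In (Suc r))"
      using glue_later_block[of r "k - e"] k unfolding glue_def by simp
    also have "k - e - E r + In (Suc r) = glue_pos In Out k - e" unfolding pk using True by arith
    finally show ?thesis by simp
  next
    case False
    define e1 where "e1 = E r - (k - e)"
    have e1R: "e1 < R" unfolding e1_def using k e R(3) by simp
    have ke: "k - e \<le> E r" using False by simp
    have "glue A In Out (k - e) = A r (Out r - e1)"
    proof (cases r)
      case 0
      then show ?thesis using glue_first_block[of "k - e"] ke unfolding glue_def e1_def by simp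
    next
      case (Suc r')
      have "E r - E r' = Out r - In r" "R \<le> Out r - In r" using Suc block_nonempty[of r'] R(1) by simp_all
      then have "E r' < k - e" using e1R ke unfolding e1_def by linarith
      then have "glue_seg In Out (k - e) = r \<and> glue_pos In Out (k - e) = k - e - E r' + In r"
        using glue_later_block[of r' "k - e"] ke Suc by simp
      moreover have "k - e - E r' + In r = Out r - e1"
        unfolding e1_def using Suc block_nonempty[of r'] ke \<open>E r' < k - e\<close> by simp
      ultimately show ?thesis unfolding glue_def by simp
    qed
    also have "A r (Out r - e1) = A (Suc r) (In (Suc r) - e1)" using mb e1R by simp
    also have "In (Suc r) - e1 = glue_pos In Out k - e"
      unfolding pk e1_def using ke e R k(1) e1R by arith
    finally show ?thesis by simp
  qed
qed

lemma glue_window_agree: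
  fixes A :: "nat \<Rightarrow> nat \<Rightarrow> int"
  assumes mf: "\<And>e. e < R \<Longrightarrow> A (Suc r) (Out (Suc r) + 1 + e) = A (Suc (Suc r)) (In (Suc (Suc r)) + 1 + e)"
    and mb: "\<And>e. e < R \<Longrightarrow> A r (Out r - e) = A (Suc r) (In (Suc r) - e)"
    and k: "E r < k" "k \<le> E (Suc r)"
    and R: "R \<le> Out (Suc (Suc r)) - In (Suc (Suc r))" "r = 0 \<or> R \<le> Out r - In r" "R \<le> In (Suc r)" "R \<le> k"
  shows "digits_agree (A (Suc r)) (glue_pos In Out k) (glue A In Out) k R"
  unfolding digits_agree_def
  using glue_window_forward[OF mf k R(1)] glue_window_backward[OF mb k R(2-4)] R(3,4) glue_later_block[OF k]
  by auto

lemma den_residues_glue: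
  fixes A :: "nat \<Rightarrow> nat \<Rightarrow> int"
  assumes match: "\<And>r. den_residues n (A r) (Out r) = den_residues n (A (Suc r)) (In (Suc r))"
  shows "den_residues n (glue A In Out) k = den_residues n (A (glue_seg In Out k)) (glue_pos In Out k)"
proof (induction k)
  case 0
  then show ?case using glue_first_block[of 0] unfolding den_residues_def glue_def by simp
next
  case (Suc k)
  consider "Suc k \<le> E 0" | r where "E r < Suc k" "Suc k \<le> E (Suc r)" by (rule glue_block_cases)
  then show ?case
  proof cases
    case 1
    have "glue A In Out i = A 0 i" if "i \<le> Suc k" for i
      using glue_first_block[of i] that 1 unfolding glue_def by simp
    then have "den_residues n (glue A In Out) (Suc k) = den_residues n (A 0) (Suc k)"
      by (rule den_residues_cong)
    then show ?thesis using glue_first_block[OF 1] by simp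
  next
    case (2 r)
    define p where "p = k - E r + In (Suc r)"
    have S: "glue_seg In Out (Suc k) = Suc r" "glue_pos In Out (Suc k) = Suc p"
      using glue_later_block[OF 2] 2(1) unfolding p_def by auto
    have "den_residues n (glue A In Out) k = den_residues n (A (Suc r)) p"
    proof (cases "E r < k")
      case True
      then have "glue_seg In Out k = Suc r" "glue_pos In Out k = p"
        using glue_later_block[of r k] 2 unfolding p_def by auto
      then show ?thesis using Suc.IH by simp
    next
      case False
      then have "k = E r" using 2 by simp
      then show ?thesis using Suc.IH glue_at_block_end[of r] match[of r] unfolding p_def by simp
    qed
    moreover have "glue A In Out (Suc k) = A (Suc r) (Suc p)" unfolding glue_def S ..
    ultimately show ?thesis unfolding S by (rule den_residues_Suc_cong)
  qed
qed

lemma cf_digits_glue: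
  assumes "\<And>r. cf_digits (A r)"
  shows "cf_digits (glue A In Out)"
  unfolding cf_digits_def
proof (intro allI impI)
  fix k :: nat assume k: "k \<ge> 1"
  consider "k \<le> E 0" | r where "E r < k" "k \<le> E (Suc r)" by (rule glue_block_cases)
  then show "glue A In Out k \<ge> 1"
  proof cases
    case 1
    then show ?thesis using glue_first_block cf_digitsD[OF assms k] unfolding glue_def by simp
  next
    case (2 r)
    then have "glue A In Out k = A (Suc r) (k - E r + In (Suc r))" "k - E r + In (Suc r) \<ge> 1"
      using glue_later_block unfolding glue_def by auto
    then show ?thesis using cf_digitsD[OF assms] by simp
  qed
qed

end

definition local_sig :: "nat \<Rightarrow> nat \<Rightarrow> (nat \<Rightarrow> int) \<Rightarrow> nat \<Rightarrow> int list \<times> int list \<times> (int \<times> int)" where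
  "local_sig n L a p = (map (\<lambda>e. a (p + 1 + e)) [0..<L], map (\<lambda>e. a (p - e)) [0..<L], den_residues n a p)"

lemma local_sig_eqD:
  assumes "local_sig n L a p = local_sig n L b q"
  shows "\<forall>e<L. a (p + 1 + e) = b (q + 1 + e)" "\<forall>e<L. a (p - e) = b (q - e)"
    "den_residues n a p = den_residues n b q"
  using assms unfolding local_sig_def by (auto simp: map_eq_conv)

definition sig_space :: "nat \<Rightarrow> real \<Rightarrow> nat \<Rightarrow> (int list \<times> int list \<times> (int \<times> int)) set" where
  "sig_space n M L = {xs. set xs \<subseteq> {1..\<lfloor>M\<rfloor>} \<and> length xs = L} \<times> {xs. set xs \<subseteq> {1..\<lfloor>M\<rfloor>} \<and> length xs = L} \<times>
                     ({0..<int n} \<times> {0..<int n})"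

lemma finite_sig_space: "finite (sig_space n M L)"
  unfolding sig_space_def using finite_lists_length_eq[of "{1..\<lfloor>M\<rfloor>}" L] by simp

lemma local_sig_in_sig_space:
  assumes n: "n > 0" and va: "cf_digits a" and T: "\<And>j. j \<ge> T \<Longrightarrow> real_of_int (a (Suc j)) \<le> M"
    and p: "p \<ge> T + L"
  shows "local_sig n L a p \<in> sig_space n M L"
proof -
  have "a (p + 1 + e) \<in> {1..\<lfloor>M\<rfloor>} \<and> a (p - e) \<in> {1..\<lfloor>M\<rfloor>}" if e: "e < L" for e
  proof -
    have "real_of_int (a (Suc (p + e))) \<le> M" "real_of_int (a (Suc (p - e - 1))) \<le> M" using T p e by simp_all
    moreover have "Suc (p - e - 1) = p - e" using p e by simp
    ultimately show ?thesis using cf_digitsD[OF va] p e by (simp add: le_floor_iff)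
  qed
  then show ?thesis unfolding sig_space_def local_sig_def den_residues_def using n by auto
qed

lemma recurring_local_sig:
  assumes "n > 0" "cf_digits a" "\<And>j. j \<ge> T \<Longrightarrow> real_of_int (a (Suc j)) \<le> M"
    and S: "infinite S" "\<And>p. p \<in> S \<Longrightarrow> p \<ge> T + L"
  obtains i j where "i \<in> S" "j \<in> S" "i + L < j" "local_sig n L a j = local_sig n L a i"
proof -
  have "local_sig n L a ` S \<subseteq> sig_space n M L" using local_sig_in_sig_space[OF assms(1-3)] S(2) by blast
  then have "finite (local_sig n L a ` S)" using finite_sig_space finite_subset by blast
  then obtain i where i: "i \<in> S" "infinite {j\<in>S. local_sig n L a j = local_sig n L a i}"
    using pigeonhole_infinite[OF S(1)] by blast
  then obtain j where "j \<ge> i + L + 1" "j \<in> S" "local_sig n L a j = local_sig n L a i"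
    unfolding infinite_nat_iff_unbounded_le by blast
  then show ?thesis using that i(1) by simp
qed

definition cf_repeat :: "(nat \<Rightarrow> int) \<Rightarrow> nat \<Rightarrow> nat \<Rightarrow> nat \<Rightarrow> int" where
  "cf_repeat a i j = glue (\<lambda>_. a) (\<lambda>_. i) (\<lambda>_. j)"

lemma gluing_const: "i < j \<Longrightarrow> gluing (\<lambda>_. i) (\<lambda>_. j)"
  by unfold_locales simp

lemma glue_end_const: "glue_end (\<lambda>_. i) (\<lambda>_. j) r = j + r * (j - i)"
  by (induction r) auto

lemma cf_repeat_periodic:
  assumes ij: "i < j" and k: "k > j"
  shows "cf_repeat a i j (k + (j - i)) = cf_repeat a i j k"
proof -
  interpret gluing "\<lambda>_. i" "\<lambda>_. j" using gluing_const[OF ij] .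
  obtain r where r: "E r < k" "k \<le> E (Suc r)"
    using glue_block_cases[of k] k by (metis glue_end.simps(1) not_less)
  then have "E (Suc r) < k + (j - i)" "k + (j - i) \<le> E (Suc (Suc r))" using ij by auto
  then have "glue_pos (\<lambda>_. i) (\<lambda>_. j) (k + (j - i)) = glue_pos (\<lambda>_. i) (\<lambda>_. j) k"
    using glue_later_block[OF r] glue_later_block[of "Suc r" "k + (j - i)"] r(1) ij by simp
  then show ?thesis unfolding cf_repeat_def glue_def by simp
qed

lemma quadratic_irrational_cf_repeat:
  assumes "cf_digits a" "i < j"
  shows "quadratic_irrational (cf_value (cf_repeat a i j))"
proof (rule quadratic_irrational_if_periodic[where P = "j - i" and i = j])
  show "cf_digits (cf_repeat a i j)"
    unfolding cf_repeat_def using assms by (intro gluing.cf_digits_glue gluing_const) auto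
qed (use assms cf_repeat_periodic in auto)

lemma cf_repeat_local_copy:
  assumes ij: "i < j" and R: "R \<le> i" "R < j - i" and sig: "local_sig n R a j = local_sig n R a i"
    and m: "m > j"
  shows "i < glue_pos (\<lambda>_. i) (\<lambda>_. j) m"
    and "digits_agree a (glue_pos (\<lambda>_. i) (\<lambda>_. j) m) (cf_repeat a i j) m R"
    and "den_residues n a (glue_pos (\<lambda>_. i) (\<lambda>_. j) m) = den_residues n (cf_repeat a i j) m"
proof -
  interpret gluing "\<lambda>_. i" "\<lambda>_. j" using gluing_const[OF ij] .
  obtain r where r: "E r < m" "m \<le> E (Suc r)"
    using glue_block_cases[of m] m by (metis glue_end.simps(1) not_less)
  show "i < glue_pos (\<lambda>_. i) (\<lambda>_. j) m" using glue_later_block[OF r] r(1) by simp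
  have "digits_agree ((\<lambda>_. a) (Suc r)) (glue_pos (\<lambda>_. i) (\<lambda>_. j) m) (glue (\<lambda>_. a) (\<lambda>_. i) (\<lambda>_. j)) m R"
    using local_sig_eqD[OF sig] R r m by (intro glue_window_agree) auto
  then show "digits_agree a (glue_pos (\<lambda>_. i) (\<lambda>_. j) m) (cf_repeat a i j) m R"
    unfolding cf_repeat_def by simp
  show "den_residues n a (glue_pos (\<lambda>_. i) (\<lambda>_. j) m) = den_residues n (cf_repeat a i j) m"
    unfolding cf_repeat_def using den_residues_glue[of n "\<lambda>_. a"] local_sig_eqD(3)[OF sig] by simp
qed

lemma cf_repeat_returns:
  assumes "i < j"
  obtains m where "m \<ge> K" "m > j" "glue_pos (\<lambda>_. i) (\<lambda>_. j) m = j"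
proof -
  interpret gluing "\<lambda>_. i" "\<lambda>_. j" using gluing_const[OF assms] .
  show ?thesis
    using that[of "E (Suc K)"] glue_at_block_end[of "Suc K"] E_ge[of "Suc K"] glue_end_const[of i j "Suc K"] assms
    by simp
qed

lemma lambda_n_le_cf_repeat:
  assumes va: "cf_digits a" and n: "n > 0" and y: "1 \<le> y" "y \<le> Y" and M0: "M \<ge> 0"
    and win: "window_ok n M Y \<epsilon> R" and ij: "i < j" "R \<le> i" "R < j - i"
    and sig: "local_sig n R a j = local_sig n R a i"
    and dig: "\<And>p. p > i \<Longrightarrow> real_of_int (a (Suc p)) \<le> M"
    and bnd: "\<And>p u v. p > i \<Longrightarrow> u + v * den_ratio a p \<ge> 1/2 \<Longrightarrow> lam_at n a p u v \<le> y"
  shows "lambda_n n (cf_value (cf_repeat a i j)) \<le> ereal (y + \<epsilon>)"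
proof (rule lambda_n_le_of_local_copies[OF _ n y M0 win])
  show "cf_digits (cf_repeat a i j)"
    unfolding cf_repeat_def using va ij by (intro gluing.cf_digits_glue gluing_const) auto
  fix m assume "m \<ge> Suc j"
  then show "\<exists>c p. cf_digits c \<and> digits_agree c p (cf_repeat a i j) m R \<and>
        den_residues n c p = den_residues n (cf_repeat a i j) m \<and> real_of_int (c (Suc p)) \<le> M \<and>
        (\<forall>u v. u + v * den_ratio c p \<ge> 1/2 \<longrightarrow> lam_at n c p u v \<le> y)"
    using cf_repeat_local_copy[OF ij sig, of m] va dig bnd by (intro exI[of _ a] exI) auto
qed

lemma lambda_n_ge_cf_repeat:
  assumes va: "cf_digits a" and n: "n > 0" and y: "y - \<epsilon> > 0" and M0: "M \<ge> 0"
    and win: "window_ok n M Y \<epsilon> R" and ij: "i < j" "R \<le> i" "R < j - i"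
    and sig: "local_sig n R a j = local_sig n R a i"
    and dig: "real_of_int (a (Suc j)) \<le> M"
    and uv: "\<bar>real_of_int u\<bar> \<le> coeff_bound n M" "\<bar>real_of_int v\<bar> \<le> coeff_bound n M"
      "u + v * den_ratio a j \<ge> 1" "y \<le> lam_at n a j u v" "lam_at n a j u v \<le> Y"
  shows "ereal (y - \<epsilon>) \<le> lambda_n n (cf_value (cf_repeat a i j))"
proof (rule lambda_n_ge_of_local_copies[OF _ n y M0 win])
  show "cf_digits (cf_repeat a i j)"
    unfolding cf_repeat_def using va ij by (intro gluing.cf_digits_glue gluing_const) auto
  fix K
  obtain m where m: "m \<ge> K" "m > j" "glue_pos (\<lambda>_. i) (\<lambda>_. j) m = j" using cf_repeat_returns[OF ij(1)] .
  then show "\<exists>m\<ge>K. \<exists>c p u v. cf_digits c \<and> digits_agree c p (cf_repeat a i j) m R \<and>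
        den_residues n c p = den_residues n (cf_repeat a i j) m \<and> real_of_int (c (Suc p)) \<le> M \<and>
        \<bar>real_of_int u\<bar> \<le> coeff_bound n M \<and> \<bar>real_of_int v\<bar> \<le> coeff_bound n M \<and>
        u + v * den_ratio c p \<ge> 1 \<and> y \<le> lam_at n c p u v \<and> lam_at n c p u v \<le> Y"
    using cf_repeat_local_copy[OF ij sig m(2)] va dig uv by (intro exI[of _ m]) auto
qed

section \<open>Approximation by quadratic irrationals\<close>

lemma lambda_n_approx_by_quadratic:
  assumes n: "n > 0" and xi: "\<xi> \<notin> \<rat>" and lam: "lambda_n n \<xi> = ereal x" and e: "e > 0"
  obtains \<eta> x' where "quadratic_irrational \<eta>" "lambda_n n \<eta> = ereal x'" "\<bar>x' - x\<bar> < e"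
proof -
  define \<epsilon> where "\<epsilon> = min (1/4) (e / 3)"
  have ep: "\<epsilon> > 0" "\<epsilon> \<le> 1/4" "3 * \<epsilon> \<le> e" unfolding \<epsilon>_def using e by auto
  obtain a where va: "cf_digits a" and lam': "lambda_n n (cf_value a) = ereal x"
    using cf_expansion_exists[OF xi] lam by metis
  have x1: "x \<ge> 1" using lambda_n_ge_1[OF va n] lam' by simp
  define M where "M = x + 1"
  obtain T where T: "\<And>j. j \<ge> T \<Longrightarrow> real_of_int (a (Suc j)) \<le> M"
    "\<And>j u v. j \<ge> T \<Longrightarrow> u + v * den_ratio a j \<ge> 1/2 \<Longrightarrow> lam_at n a j u v < x + \<epsilon>"
    using eventual_bounds_of_lambda_n[OF va n lam' ep(1)] unfolding M_def by blast
  obtain R where win: "window_ok n M (x + 2) \<epsilon> R"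
    using window_ok_exists[of "x + 2" \<epsilon> M] x1 ep unfolding M_def by auto
  define S where "S = {j. T + R \<le> j \<and> (\<exists>u v. \<bar>real_of_int u\<bar> \<le> coeff_bound n M \<and>
    \<bar>real_of_int v\<bar> \<le> coeff_bound n M \<and> u + v * den_ratio a j \<ge> 1 \<and> lam_at n a j u v > x - \<epsilon>)}"
  have "ereal (x - \<epsilon>) < lambda_n n (cf_value a)" "x - \<epsilon> \<ge> 1/2" using lam' ep x1 by simp_all
  then have "infinite S" unfolding S_def by (rule infinite_large_positions[OF va n _ _ T(1)])
  moreover have "\<And>p. p \<in> S \<Longrightarrow> p \<ge> T + R" unfolding S_def by auto
  ultimately obtain i j where ij: "i \<in> S" "j \<in> S" "i + R < j" and sig: "local_sig n R a j = local_sig n R a i"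
    using recurring_local_sig[OF n va T(1)] by blast
  then obtain u v where uv: "\<bar>real_of_int u\<bar> \<le> coeff_bound n M" "\<bar>real_of_int v\<bar> \<le> coeff_bound n M"
    "u + v * den_ratio a j \<ge> 1" "lam_at n a j u v > x - \<epsilon>" unfolding S_def by blast
  have i: "i \<ge> T + R" "i < j" "R \<le> i" "R < j - i" using ij unfolding S_def by auto
  have dig: "real_of_int (a (Suc p)) \<le> M" if "p \<ge> i" for p
    using T(1)[of p] that i(1) by simp
  have bnd: "lam_at n a p u v \<le> x + \<epsilon>" if "p \<ge> i" "u + v * den_ratio a p \<ge> 1/2" for p u v
    using T(2)[of p u v] that i(1) by simp
  define \<eta> where "\<eta> = cf_value (cf_repeat a i j)"
  have "lambda_n n \<eta> \<le> ereal (x + \<epsilon> + \<epsilon>)"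
    unfolding \<eta>_def using x1 ep i dig bnd
    by (intro lambda_n_le_cf_repeat[OF va n _ _ _ win _ _ _ sig]) (auto simp: M_def)
  moreover have "ereal (x - \<epsilon> - \<epsilon>) \<le> lambda_n n \<eta>"
    unfolding \<eta>_def using x1 ep i dig[of j] bnd[of j u v] uv
    by (intro lambda_n_ge_cf_repeat[OF va n _ _ win _ _ _ sig _ uv(1-3)]) (auto simp: M_def)
  ultimately obtain x' where x': "lambda_n n \<eta> = ereal x'" "\<bar>x' - x\<bar> < e"
    using ep by (cases "lambda_n n \<eta>") auto
  then show ?thesis using that quadratic_irrational_cf_repeat[OF va i(2)] unfolding \<eta>_def by blast
qed


section \<open>Closedness of the spectrum\<close>

text \<open>A diagonal choice: \<open>s\<^sub>L\<close> is chosen so that \<open>G L s\<^sub>L\<close> meets the previous (infinite) intersection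
  infinitely often, and \<open>k\<^sub>L\<close> is the least index of the new intersection beyond \<open>k\<^sub>L\<^sub>-\<^sub>1\<close>.\<close>

definition nest_choose :: "(nat \<Rightarrow> 's \<Rightarrow> nat set) \<Rightarrow> nat set \<Rightarrow> nat \<Rightarrow> 's" where
  "nest_choose G I L = (SOME s. infinite (I \<inter> G L s))"

fun nest_set :: "(nat \<Rightarrow> 's \<Rightarrow> nat set) \<Rightarrow> nat \<Rightarrow> nat set" where
  "nest_set G 0 = G 0 (nest_choose G UNIV 0)"
| "nest_set G (Suc L) = nest_set G L \<inter> G (Suc L) (nest_choose G (nest_set G L) (Suc L))"

fun nest_sig :: "(nat \<Rightarrow> 's \<Rightarrow> nat set) \<Rightarrow> nat \<Rightarrow> 's" where
  "nest_sig G 0 = nest_choose G UNIV 0"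
| "nest_sig G (Suc L) = nest_choose G (nest_set G L) (Suc L)"

fun nest_index :: "(nat \<Rightarrow> 's \<Rightarrow> nat set) \<Rightarrow> nat \<Rightarrow> nat" where
  "nest_index G 0 = (LEAST k. k \<in> nest_set G 0)"
| "nest_index G (Suc L) = (LEAST k. k \<in> nest_set G (Suc L) \<and> k > nest_index G L)"

lemma nested_choice:
  fixes G :: "nat \<Rightarrow> 's \<Rightarrow> nat set"
  assumes ex: "\<And>I L. infinite I \<Longrightarrow> \<exists>s. infinite (I \<inter> G L s)"
  shows "strict_mono (nest_index G)" "nest_index G L \<in> G L (nest_sig G L)"
    "nest_index G (Suc L) \<in> G L (nest_sig G L)"
proof -
  have nx: "infinite (I \<inter> G L (nest_choose G I L))" if "infinite I" for I L
    unfolding nest_choose_def using ex[OF that, of L] by (rule someI_ex)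
  have inf: "infinite (nest_set G L)" for L
  proof (induction L)
    case 0
    then show ?case using nx[of UNIV 0] by simp
  next
    case (Suc L)
    then show ?case using nx[of "nest_set G L" "Suc L"] by simp
  qed
  have sub: "nest_set G L \<subseteq> G L (nest_sig G L)" for L by (cases L) auto
  have kin: "nest_index G L \<in> nest_set G L \<and> (\<forall>L'. L = Suc L' \<longrightarrow> nest_index G L > nest_index G L')" for L
  proof (cases L)
    case 0
    obtain k where "k \<in> nest_set G 0" using inf[of 0] by (metis finite.emptyI ex_in_conv)
    then have "(LEAST k. k \<in> nest_set G 0) \<in> nest_set G 0" by (rule LeastI)
    then show ?thesis using 0 by simp
  next
    case (Suc L')
    obtain k where "k \<in> nest_set G (Suc L') \<and> k > nest_index G L'"
      using inf[of "Suc L'"] unfolding infinite_nat_iff_unbounded by blast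
    then show ?thesis
      using LeastI[where P = "\<lambda>k. k \<in> nest_set G (Suc L') \<and> k > nest_index G L'"] Suc by simp
  qed
  show "strict_mono (nest_index G)" by (rule strict_monoI_Suc) (use kin in blast)
  show "nest_index G L \<in> G L (nest_sig G L)" using kin sub by blast
  show "nest_index G (Suc L) \<in> G L (nest_sig G L)" using kin[of "Suc L"] sub[of L] by auto
qed

lemma ereal_le_of_eps:
  assumes "\<delta> > 0" "\<And>\<epsilon>. 0 < \<epsilon> \<Longrightarrow> \<epsilon> \<le> \<delta> \<Longrightarrow> z \<le> ereal (x + \<epsilon>)"
  shows "z \<le> ereal x"
proof (rule ereal_le_epsilon2)
  fix e :: real assume "e > 0"
  then have "z \<le> ereal (x + min e \<delta>)" using assms by simp
  also have "\<dots> \<le> ereal x + ereal e" by simp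
  finally show "z \<le> ereal x + ereal e" .
qed

lemma ereal_ge_of_eps:
  assumes "\<delta> > 0" "\<And>\<epsilon>. 0 < \<epsilon> \<Longrightarrow> \<epsilon> \<le> \<delta> \<Longrightarrow> ereal (x - \<epsilon>) \<le> z"
  shows "ereal x \<le> z"
proof (rule ccontr)
  assume "\<not> ereal x \<le> z"
  then obtain r where r: "z < ereal r" "ereal r < ereal x" using ereal_dense2 by (meson not_le)
  define \<epsilon> where "\<epsilon> = min \<delta> ((x - r) / 2)"
  have "0 < \<epsilon>" "\<epsilon> \<le> \<delta>" unfolding \<epsilon>_def using r assms(1) by auto
  moreover have "\<epsilon> \<le> (x - r) / 2" unfolding \<epsilon>_def by (rule min.cobounded2)
  then have "r < x - \<epsilon>" using r by simp
  then have "z < ereal (x - \<epsilon>)" using r(1) by (simp add: order.strict_trans)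
  with assms(2)[OF \<open>0 < \<epsilon>\<close> \<open>\<epsilon> \<le> \<delta>\<close>] show False by simp
qed

text \<open>The sequence glued from expansions \<open>c k\<close> whose values \<open>y k\<close> tend to \<open>x\<close>: block \<open>r\<close> comes from
  \<open>c (idx r)\<close> and runs between two positions where the quotient is large and whose local signatures
  of length \<open>r\<close> match those of the neighbouring blocks.\<close>

locale limit_gluing =
  fixes n :: nat and x :: real and c :: "nat \<Rightarrow> nat \<Rightarrow> int" and y :: "nat \<Rightarrow> real" and T :: "nat \<Rightarrow> nat"
  assumes n_pos: "n > 0" and x_ge_1: "x \<ge> 1"
    and digits: "\<And>k. cf_digits (c k)"
    and y_close: "\<And>k. \<bar>y k - x\<bar> < 1 / (real k + 2)"
    and digit_bound: "\<And>k j. j \<ge> T k \<Longrightarrow> real_of_int (c k (Suc j)) \<le> x + 3"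
    and lam_at_upper: "\<And>k j u v. j \<ge> T k \<Longrightarrow> u + v * den_ratio (c k) j \<ge> 1/2 \<Longrightarrow>
      lam_at n (c k) j u v < y k + 1 / (real k + 2)"
    and lam_at_large: "\<And>k J. \<exists>p\<ge>J. \<exists>u v. \<bar>real_of_int u\<bar> \<le> coeff_bound n (x + 3) \<and>
      \<bar>real_of_int v\<bar> \<le> coeff_bound n (x + 3) \<and> u + v * den_ratio (c k) p \<ge> 1 \<and>
      lam_at n (c k) p u v > y k - 1 / (real k + 2)"
begin

definition large_at :: "nat \<Rightarrow> nat \<Rightarrow> bool" where
  "large_at k p \<longleftrightarrow> (\<exists>u v. \<bar>real_of_int u\<bar> \<le> coeff_bound n (x + 3) \<and> \<bar>real_of_int v\<bar> \<le> coeff_bound n (x + 3) \<and>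
      u + v * den_ratio (c k) p \<ge> 1 \<and> lam_at n (c k) p u v > y k - 1 / (real k + 2))"

definition sig_positions :: "nat \<Rightarrow> nat \<Rightarrow> int list \<times> int list \<times> (int \<times> int) \<Rightarrow> nat set" where
  "sig_positions k L s = {p. p \<ge> T k + L \<and> large_at k p \<and> local_sig n L (c k) p = s}"

definition sig_indices :: "nat \<Rightarrow> int list \<times> int list \<times> (int \<times> int) \<Rightarrow> nat set" where
  "sig_indices L s = {k. infinite (sig_positions k L s)}"

lemma sig_indices_cover: "\<exists>s\<in>sig_space n (x + 3) L. k \<in> sig_indices L s"
proof -
  define S where "S = {p. p \<ge> T k + L \<and> large_at k p}"
  have "infinite S"
    unfolding infinite_nat_iff_unbounded_le
  proof
    fix K
    obtain p where "p \<ge> max K (T k + L)" "large_at k p" using lam_at_large unfolding large_at_def by blast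
    then show "\<exists>p\<ge>K. p \<in> S" unfolding S_def by auto
  qed
  moreover have "local_sig n L (c k) ` S \<subseteq> sig_space n (x + 3) L"
    using local_sig_in_sig_space[OF n_pos digits digit_bound] unfolding S_def by blast
  then have "finite (local_sig n L (c k) ` S)" using finite_sig_space finite_subset by blast
  ultimately obtain p where p: "p \<in> S" "infinite {q\<in>S. local_sig n L (c k) q = local_sig n L (c k) p}"
    using pigeonhole_infinite by blast
  have "{q\<in>S. local_sig n L (c k) q = local_sig n L (c k) p} = sig_positions k L (local_sig n L (c k) p)"
    unfolding S_def sig_positions_def by auto
  then show ?thesis
    using p \<open>local_sig n L (c k) ` S \<subseteq> _\<close> unfolding sig_indices_def by auto
qed

lemma infinite_inter_sig_indices: "infinite I \<Longrightarrow> \<exists>s. infinite (I \<inter> sig_indices L s)"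
proof (rule ccontr)
  assume I: "infinite I" and "\<nexists>s. infinite (I \<inter> sig_indices L s)"
  then have "finite (\<Union>s\<in>sig_space n (x + 3) L. I \<inter> sig_indices L s)"
    using finite_sig_space by blast
  moreover have "I \<subseteq> (\<Union>s\<in>sig_space n (x + 3) L. I \<inter> sig_indices L s)" using sig_indices_cover by blast
  ultimately show False using I finite_subset by blast
qed

definition idx :: "nat \<Rightarrow> nat" where "idx = nest_index sig_indices"
definition sig :: "nat \<Rightarrow> int list \<times> int list \<times> (int \<times> int)" where "sig = nest_sig sig_indices"

lemma idx_props: "strict_mono idx" "idx L \<in> sig_indices L (sig L)" "idx (Suc L) \<in> sig_indices L (sig L)"
  unfolding idx_def sig_def using nested_choice[of sig_indices, OF infinite_inter_sig_indices] by auto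

lemma idx_ge: "idx r \<ge> r"
  using idx_props(1) by (rule strict_mono_imp_increasing)

definition In :: "nat \<Rightarrow> nat" where
  "In r = (case r of 0 \<Rightarrow> 0 | Suc r' \<Rightarrow> (LEAST p. p \<in> sig_positions (idx (Suc r')) r' (sig r')))"

definition Out :: "nat \<Rightarrow> nat" where
  "Out r = (LEAST p. p \<in> sig_positions (idx r) r (sig r) \<and> p \<ge> In r + r + 1)"

lemma In_mem: "In (Suc r) \<in> sig_positions (idx (Suc r)) r (sig r)"
proof -
  have "infinite (sig_positions (idx (Suc r)) r (sig r))"
    using idx_props(3)[of r] unfolding sig_indices_def by simp
  then obtain p where "p \<in> sig_positions (idx (Suc r)) r (sig r)" by (metis finite.emptyI ex_in_conv)
  then have "(LEAST p. p \<in> sig_positions (idx (Suc r)) r (sig r)) \<in> sig_positions (idx (Suc r)) r (sig r)"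
    by (rule LeastI)
  then show ?thesis unfolding In_def by simp
qed

lemma Out_mem: "Out r \<in> sig_positions (idx r) r (sig r) \<and> Out r \<ge> In r + r + 1"
proof -
  have "infinite (sig_positions (idx r) r (sig r))"
    using idx_props(2)[of r] unfolding sig_indices_def by simp
  then obtain p where "p \<in> sig_positions (idx r) r (sig r) \<and> p \<ge> In r + r + 1"
    unfolding infinite_nat_iff_unbounded_le by blast
  then show ?thesis unfolding Out_def by (rule LeastI)
qed

sublocale gluing In Out
proof
  fix r show "In (Suc r) < Out (Suc r)" using Out_mem[of "Suc r"] by simp
qed

definition b :: "nat \<Rightarrow> int" where
  "b = glue (\<lambda>r. c (idx r)) In Out"

lemma block_match: "local_sig n r (c (idx r)) (Out r) = local_sig n r (c (idx (Suc r))) (In (Suc r))"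
  using Out_mem[of r] In_mem[of r] unfolding sig_positions_def by simp

lemma cf_digits_b: "cf_digits b"
  unfolding b_def using digits by (rule cf_digits_glue)

lemma den_residues_b: "den_residues n b k = den_residues n (c (idx (glue_seg In Out k))) (glue_pos In Out k)"
  unfolding b_def by (rule den_residues_glue) (use local_sig_eqD(3)[OF block_match] in blast)

lemma b_digits_agree:
  assumes k: "E r < k" "k \<le> E (Suc r)" and R: "R \<le> r"
  shows "digits_agree (c (idx (Suc r))) (glue_pos In Out k) b k R"
proof -
  have "Out (Suc (Suc r)) \<ge> In (Suc (Suc r)) + Suc (Suc r) + 1" "r = 0 \<or> R \<le> Out r - In r"
    "R \<le> In (Suc r)"
    using Out_mem[of "Suc (Suc r)"] Out_mem[of r] In_mem[of r] R unfolding sig_positions_def by auto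
  then show ?thesis
    unfolding b_def using local_sig_eqD(1,2)[OF block_match] k R E_ge[of r]
    by (intro glue_window_agree[where A = "\<lambda>r. c (idx r)"]) auto
qed

lemma b_den_residues:
  assumes "E r < k" "k \<le> E (Suc r)"
  shows "den_residues n (c (idx (Suc r))) (glue_pos In Out k) = den_residues n b k"
  using den_residues_b[of k] glue_later_block[OF assms] by simp

lemma y_bounds:
  assumes "k \<ge> r0"
  shows "y k + 1 / (real k + 2) \<le> x + 2 / (real r0 + 2)" "x - 2 / (real r0 + 2) \<le> y k - 1 / (real k + 2)"
proof -
  have "1 / (real k + 2) \<le> 1 / (real r0 + 2)" using assms by (simp add: frac_le)
  then show "y k + 1 / (real k + 2) \<le> x + 2 / (real r0 + 2)" "x - 2 / (real r0 + 2) \<le> y k - 1 / (real k + 2)"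
    using y_close[of k] by (simp_all add: abs_less_iff)
qed

lemma two_div_le_index_exists:
  assumes "\<epsilon> > 0"
  obtains r0 where "r0 \<ge> R" "2 / (real r0 + 2) \<le> \<epsilon>"
proof -
  obtain N :: nat where "real N > 2 / \<epsilon>" using reals_Archimedean2 by blast
  then have "real (max R N) + 2 \<ge> 2 / \<epsilon>" by (simp add: le_max_iff_disj)
  then have "2 / (real (max R N) + 2) \<le> \<epsilon>" using assms by (simp add: field_simps)
  then show ?thesis using that[of "max R N"] by simp
qed

lemma block_after:
  assumes "m > E r0"
  obtains r where "r \<ge> r0" "E r < m" "m \<le> E (Suc r)"
proof -
  have "\<not> m \<le> E 0" using assms E_mono[of 0 r0] by simp
  then obtain r where r: "E r < m" "m \<le> E (Suc r)" using glue_block_cases[of m] by blast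
  have "r \<ge> r0"
  proof (rule ccontr)
    assume "\<not> r \<ge> r0"
    then have "E (Suc r) \<le> E r0" using E_mono[of "Suc r" r0] by simp
    then show False using r assms by simp
  qed
  then show ?thesis using that r by blast
qed

lemma lambda_n_b_le: "lambda_n n (cf_value b) \<le> ereal x"
proof (rule ereal_le_of_eps)
  show "(0::real) < 1" by simp
  fix \<epsilon> :: real assume ep: "0 < \<epsilon>" "\<epsilon> \<le> 1"
  obtain R where win: "window_ok n (x + 3) (x + 2) (\<epsilon> / 2) R" using window_ok_exists[of "x + 2" "\<epsilon> / 2" "x + 3"] x_ge_1 ep by auto
  obtain r0 where r0: "r0 \<ge> R" "2 / (real r0 + 2) \<le> \<epsilon> / 2" using two_div_le_index_exists ep by (metis half_gt_zero)
  have "lambda_n n (cf_value b) \<le> ereal (x + \<epsilon> / 2 + \<epsilon> / 2)"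
  proof (rule lambda_n_le_of_local_copies[OF cf_digits_b n_pos _ _ _ win, where K = "Suc (E r0)"])
    fix m assume "m \<ge> Suc (E r0)"
    then obtain r where "r \<ge> r0" and r: "E r < m" "m \<le> E (Suc r)" using block_after[of r0 m] by auto
    define k where "k = idx (Suc r)"
    define p where "p = glue_pos In Out m"
    have pT: "p \<ge> T k"
      using In_mem[of r] glue_later_block[OF r] unfolding sig_positions_def k_def p_def by simp
    have ag: "digits_agree (c k) p b m R" using b_digits_agree[OF r] \<open>r \<ge> r0\<close> r0(1) unfolding k_def p_def by simp
    have res: "den_residues n (c k) p = den_residues n b m" using b_den_residues[OF r] unfolding k_def p_def .
    have "k \<ge> r0" unfolding k_def using idx_ge[of "Suc r"] \<open>r \<ge> r0\<close> by simp
    then have "\<forall>u v. u + v * den_ratio (c k) p \<ge> 1/2 \<longrightarrow> lam_at n (c k) p u v \<le> x + \<epsilon> / 2"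
      using lam_at_upper[OF pT] y_bounds(1)[of r0 k] r0(2) by fastforce
    then show "\<exists>c' p. cf_digits c' \<and> digits_agree c' p b m R \<and> den_residues n c' p = den_residues n b m \<and>
        real_of_int (c' (Suc p)) \<le> x + 3 \<and> (\<forall>u v. u + v * den_ratio c' p \<ge> 1/2 \<longrightarrow> lam_at n c' p u v \<le> x + \<epsilon> / 2)"
      using ag res digits[of k] digit_bound[OF pT] by blast
  qed (use x_ge_1 ep in auto)
  then show "lambda_n n (cf_value b) \<le> ereal (x + \<epsilon>)" by (simp add: add.commute)
qed

lemma lambda_n_b_ge: "ereal x \<le> lambda_n n (cf_value b)"
proof (rule ereal_ge_of_eps)
  show "(0::real) < 1/4" by simp
  fix \<epsilon> :: real assume ep: "0 < \<epsilon>" "\<epsilon> \<le> 1/4"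
  obtain R where win: "window_ok n (x + 3) (x + 2) (\<epsilon> / 2) R" using window_ok_exists[of "x + 2" "\<epsilon> / 2" "x + 3"] x_ge_1 ep by auto
  obtain r0 where r0: "r0 \<ge> R" "2 / (real r0 + 2) \<le> \<epsilon> / 2" using two_div_le_index_exists ep by (metis half_gt_zero)
  have "ereal (x - \<epsilon> / 2 - \<epsilon> / 2) \<le> lambda_n n (cf_value b)"
  proof (rule lambda_n_ge_of_local_copies[OF cf_digits_b n_pos _ _ win])
    fix K
    define r where "r = max r0 K"
    define m where "m = E (Suc r)"
    define k where "k = idx (Suc r)"
    have rr: "E r < m" "m \<le> E (Suc r)" unfolding m_def using E_Suc_gt by auto
    have pm: "glue_pos In Out m = Out (Suc r)" unfolding m_def using glue_at_block_end by blast
    have "Out (Suc r) \<in> sig_positions k (Suc r) (sig (Suc r))" using Out_mem[of "Suc r"] unfolding k_def by blast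
    then have pT: "Out (Suc r) \<ge> T k" and "large_at k (Out (Suc r))" unfolding sig_positions_def by auto
    then obtain u v where uv: "\<bar>real_of_int u\<bar> \<le> coeff_bound n (x + 3)" "\<bar>real_of_int v\<bar> \<le> coeff_bound n (x + 3)"
        "u + v * den_ratio (c k) (Out (Suc r)) \<ge> 1" "lam_at n (c k) (Out (Suc r)) u v > y k - 1 / (real k + 2)"
      unfolding large_at_def by blast
    have "k \<ge> r0" unfolding k_def r_def using idx_ge[of "Suc (max r0 K)"] by simp
    then have "x - \<epsilon> / 2 \<le> lam_at n (c k) (Out (Suc r)) u v" "lam_at n (c k) (Out (Suc r)) u v \<le> x + 2"
      using uv(3,4) lam_at_upper[OF pT, of u v] y_bounds[of r0 k] r0(2) ep by auto
    moreover have "m \<ge> K" unfolding m_def r_def using E_ge[of "Suc (max r0 K)"] by simp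
    moreover have "digits_agree (c k) (Out (Suc r)) b m R"
      using b_digits_agree[OF rr, of R] r0(1) pm unfolding k_def r_def by simp
    moreover have "den_residues n (c k) (Out (Suc r)) = den_residues n b m"
      using b_den_residues[OF rr] pm unfolding k_def by simp
    ultimately show "\<exists>m\<ge>K. \<exists>c' p u v. cf_digits c' \<and> digits_agree c' p b m R \<and>
        den_residues n c' p = den_residues n b m \<and> real_of_int (c' (Suc p)) \<le> x + 3 \<and>
        \<bar>real_of_int u\<bar> \<le> coeff_bound n (x + 3) \<and> \<bar>real_of_int v\<bar> \<le> coeff_bound n (x + 3) \<and>
        u + v * den_ratio c' p \<ge> 1 \<and> x - \<epsilon> / 2 \<le> lam_at n c' p u v \<and> lam_at n c' p u v \<le> x + 2"
      using digits[of k] digit_bound[OF pT] uv(1-3)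
      by (intro exI[of _ m] conjI exI[of _ "c k"] exI[of _ "Out (Suc r)"] exI[of _ u] exI[of _ v]) auto
  qed (use x_ge_1 ep in auto)
  then show "ereal (x - \<epsilon>) \<le> lambda_n n (cf_value b)" by simp
qed

lemma lambda_n_b: "lambda_n n (cf_value b) = ereal x"
  using lambda_n_b_le lambda_n_b_ge by (rule antisym)

end

lemma ge_of_approximants:
  fixes x :: real
  assumes "\<And>k. y k \<ge> 1" "\<And>k. \<bar>y k - x\<bar> < 1 / (real k + 2)"
  shows "x \<ge> 1"
proof (rule ccontr)
  assume "\<not> x \<ge> 1"
  then obtain N :: nat where "real N > 1 / (1 - x)" "1 - x > 0" using reals_Archimedean2 by auto
  then have "1 / (real N + 2) < 1 - x" by (simp add: field_simps)
  then show False using assms[of N] by (simp add: abs_less_iff)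
qed

lemma closure_L_n_approximants:
  assumes "x \<in> closure (L_n n)"
  obtains c y where "\<And>k. cf_digits (c k)" "\<And>k. lambda_n n (cf_value (c k)) = ereal (y k)"
    "\<And>k. \<bar>y k - x\<bar> < 1 / (real k + 2)"
proof -
  have "\<exists>a y'. cf_digits a \<and> lambda_n n (cf_value a) = ereal y' \<and> \<bar>y' - x\<bar> < 1 / (real k + 2)" for k
  proof -
    have "1 / (real k + 2) > 0" by simp
    then obtain y' where "y' \<in> L_n n" "\<bar>y' - x\<bar> < 1 / (real k + 2)"
      using assms unfolding closure_approachable dist_real_def by blast
    moreover obtain \<xi> where "\<xi> \<notin> \<rat>" "lambda_n n \<xi> = ereal y'" using \<open>y' \<in> L_n n\<close> unfolding L_n_def by blast
    moreover obtain a where "cf_digits a" "cf_value a = \<xi>" using cf_expansion_exists[OF \<open>\<xi> \<notin> \<rat>\<close>] by blast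
    ultimately show ?thesis by blast
  qed
  then obtain c y where "\<forall>k. cf_digits (c k) \<and> lambda_n n (cf_value (c k)) = ereal (y k) \<and> \<bar>y k - x\<bar> < 1 / (real k + 2)"
    by (metis choice)
  then show ?thesis using that by blast
qed

lemma limit_gluing_exists:
  assumes n: "n > 0" and c: "\<And>k. cf_digits (c k)" and lam: "\<And>k. lambda_n n (cf_value (c k)) = ereal (y k)"
    and y: "\<And>k. \<bar>y k - x\<bar> < 1 / (real k + 2)"
  obtains T where "limit_gluing n x c y T"
proof -
  have y1: "y k \<ge> 1" for k using lambda_n_ge_1[OF c n, of k] lam[of k] by simp
  have x1: "x \<ge> 1" using y1 y by (rule ge_of_approximants)
  have "\<exists>T. (\<forall>j\<ge>T. real_of_int (c k (Suc j)) \<le> x + 3) \<and>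
      (\<forall>j\<ge>T. \<forall>u v. u + v * den_ratio (c k) j \<ge> 1/2 \<longrightarrow> lam_at n (c k) j u v < y k + 1 / (real k + 2))" for k
  proof -
    obtain T where T: "\<And>j. j \<ge> T \<Longrightarrow> real_of_int (c k (Suc j)) \<le> y k + 1"
      "\<And>j u v. j \<ge> T \<Longrightarrow> u + v * den_ratio (c k) j \<ge> 1/2 \<Longrightarrow> lam_at n (c k) j u v < y k + 1 / (real k + 2)"
      using eventual_bounds_of_lambda_n[OF c n lam, of "1 / (real k + 2)"] by auto
    have "y k + 1 \<le> x + 3" using y[of k] by (simp add: abs_less_iff) (smt (verit) divide_le_eq_1 of_nat_0_le_iff)
    then have "real_of_int (c k (Suc j)) \<le> x + 3" if "j \<ge> T" for j using T(1)[OF that] by linarith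
    then show ?thesis using T(2) by (intro exI[of _ T]) auto
  qed
  then obtain T where "\<forall>k. (\<forall>j\<ge>T k. real_of_int (c k (Suc j)) \<le> x + 3) \<and>
      (\<forall>j\<ge>T k. \<forall>u v. u + v * den_ratio (c k) j \<ge> 1/2 \<longrightarrow> lam_at n (c k) j u v < y k + 1 / (real k + 2))"
    by (metis choice)
  then have T: "\<And>k j. j \<ge> T k \<Longrightarrow> real_of_int (c k (Suc j)) \<le> x + 3"
    "\<And>k j u v. j \<ge> T k \<Longrightarrow> u + v * den_ratio (c k) j \<ge> 1/2 \<Longrightarrow> lam_at n (c k) j u v < y k + 1 / (real k + 2)"
    by auto
  have lg: "ereal (y k - 1 / (real k + 2)) < lambda_n n (cf_value (c k))" "y k - 1 / (real k + 2) \<ge> 1/2" for k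
  proof -
    have "1 / (real k + 2) \<le> 1/2" by (simp add: field_simps)
    then show "y k - 1 / (real k + 2) \<ge> 1/2" using y1[of k] by linarith
  qed (use lam[of k] in simp)
  have "\<exists>p\<ge>J. \<exists>u v. \<bar>real_of_int u\<bar> \<le> coeff_bound n (x + 3) \<and> \<bar>real_of_int v\<bar> \<le> coeff_bound n (x + 3) \<and>
      u + v * den_ratio (c k) p \<ge> 1 \<and> lam_at n (c k) p u v > y k - 1 / (real k + 2)" for k J
  proof -
    obtain p u v where "p \<ge> J" "\<bar>real_of_int u\<bar> \<le> coeff_bound n (x + 3)" "\<bar>real_of_int v\<bar> \<le> coeff_bound n (x + 3)"
      "u + v * den_ratio (c k) p \<ge> 1" "lam_at n (c k) p u v > y k - 1 / (real k + 2)"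
      by (rule lam_at_frequently_greater[OF c n lg(1) lg(2) T(1), where J = J])
    then show ?thesis by blast
  qed
  then have "limit_gluing n x c y T"
    using n x1 c y T by unfold_locales auto
  then show ?thesis using that by blast
qed

lemma closed_L_n:
  assumes n: "n > 0"
  shows "closed (L_n n)"
proof -
  have "x \<in> L_n n" if xcl: "x \<in> closure (L_n n)" for x
  proof -
    obtain c y where c: "\<And>k. cf_digits (c k)" and lam: "\<And>k. lambda_n n (cf_value (c k)) = ereal (y k)"
      and y: "\<And>k. \<bar>y k - x\<bar> < 1 / (real k + 2)"
      using closure_L_n_approximants[OF xcl] by blast
    obtain T where "limit_gluing n x c y T" using limit_gluing_exists[OF n c lam y] by blast
    then interpret limit_gluing n x c y T .
    show "x \<in> L_n n"
      unfolding L_n_def using cf_value_irrational[OF cf_digits_b] lambda_n_b by blast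
  qed
  then show ?thesis using closure_subset_eq by blast
qed

theorem proposition5p2:
  fixes n :: nat
  assumes "n > 0"
  shows "L_n n = closure (P_n n)"
proof
  show "L_n n \<subseteq> closure (P_n n)"
  proof
    fix x assume "x \<in> L_n n"
    then obtain \<xi> where "\<xi> \<notin> \<rat>" "lambda_n n \<xi> = ereal x" unfolding L_n_def by blast
    then have "\<exists>y\<in>P_n n. dist y x < e" if "e > 0" for e
      using lambda_n_approx_by_quadratic[OF assms _ _ that] unfolding P_n_def dist_real_def by blast
    then show "x \<in> closure (P_n n)" unfolding closure_approachable by blast
  qed
  have "P_n n \<subseteq> L_n n" unfolding P_n_def L_n_def quadratic_irrational_def by blast
  then show "closure (P_n n) \<subseteq> L_n n" using closed_L_n[OF assms] by (rule closure_minimal)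
qed

end
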